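(* The subspace $\operatorname{Ker}\psi_1\subset k(Q_1//B)$ is closed under the bracket $[(a,\gamma),(b,\varepsilon)]=(b,\varepsilon^{(a,\gamma)})-(a,\gamma^{(b,\varepsilon)})$ (for $(a,\gamma),(b,\varepsilon)\in Q_1//B$, extended bilinearly), $\operatorname{Im}\psi_0$ is a Lie ideal of $\operatorname{Ker}\psi_1$, and the resulting quotient Lie algebra $\operatorname{Ker}\psi_1/\operatorname{Im}\psi_0$ is isomorphic, as a Lie algebra, to the first Hochschild cohomology $\operatorname{H}^1(\Lambda,\Lambda)=\operatorname{Der}_k(\Lambda)/\operatorname{Ad}_k(\Lambda)$ with the bracket induced by the commutator $[f,g]=f\circ g-g\circ f$.
   Context: Let $k$ be an algebraically closed field and $Q$ a finite quiver; $Q_n$ is the set of paths of length $n$ ($Q_0$ = vertices, $Q_1$ = arrows), $s(\gamma),t(\gamma)$ are source and terminus of a path $\gamma$, and in $kQ$ the product $\beta\alpha$ is the concatenation "first $\alpha$, then $\beta$" if $t(\alpha)=s(\beta)$, and $0$ otherwise. Let $Z$ be a minimal set of paths of length $\ge 2$ (no proper subpath of an element of $Z$ lies in $Z$) such that $\Lambda=kQ/\langle Z\rangle$ is finite dimensional. Let $B$ be the set of paths (vertices included) not containing any element of $Z$ as a subpath, $B_n=B\cap Q_n$; the classes of elements of $B$ form a basis of $\Lambda$. Paths are parallel if they have the same source and terminus; for sets of paths $X,Y$, $X//Y$ is the set of pairs $(\varepsilon,\gamma)\in X\times Y$ of parallel paths and $k(X//Y)$ is the vector space with basis $X//Y$.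 For a path $\varepsilon$ and $(a,\gamma)\in Q_1//B$, $\varepsilon^{(a,\gamma)}$ denotes the sum of all paths lying in $B$ obtained by replacing one occurrence of the arrow $a$ in $\varepsilon$ by $\gamma$ ($0$ if there is none); if $\varepsilon^{(a,\gamma)}=\sum_i\varepsilon_i$ ($\varepsilon_i\in B$) and $\eta$ is parallel to $\varepsilon$, then $(\eta,\varepsilon^{(a,\gamma)}):=\sum_i(\eta,\varepsilon_i)$ (zero if the sum is empty). Define $\psi_0:k(Q_0//B)\to k(Q_1//B)$ by $(e,\gamma)\mapsto\sum_{a\in Q_1,\ s(a)=e,\ a\gamma\in B}(a,a\gamma)-\sum_{a\in Q_1,\ t(a)=e,\ \gamma a\in B}(a,\gamma a)$, and $\psi_1:k(Q_1//B)\to k(Z//B)$ by $(a,\gamma)\mapsto\sum_{p\in Z}(p,p^{(a,\gamma)})$. $\operatorname{Der}_k(\Lambda)$ denotes the $k$-linear derivations and $\operatorname{Ad}_k(\Lambda)$ the inner derivations $x\mapsto ax-xa$. *)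

theory Defs
  imports "HOL-Computational_Algebra.Polynomial"
begin

definition alg_closed :: "'k::field itself \<Rightarrow> bool" where
  "alg_closed _ \<longleftrightarrow> (\<forall>p :: 'k poly. degree p > 0 \<longrightarrow> (\<exists>x. poly p x = 0))"

record ('v, 'a) quiver =
  verts :: "'v set"
  arrs  :: "'a set"
  src   :: "'a \<Rightarrow> 'v"
  tgt   :: "'a \<Rightarrow> 'v"

definition finite_quiver :: "('v, 'a) quiver \<Rightarrow> bool" where
  "finite_quiver Q \<longleftrightarrow> finite (verts Q) \<and> finite (arrs Q) \<and>
     (\<forall>a\<in>arrs Q. src Q a \<in> verts Q \<and> tgt Q a \<in> verts Q)"

text \<open>A path is a start vertex together with the list of its arrows in the order
  in which they are traversed; paths of length 0 are the vertices (trivial paths).\<close>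
type_synonym ('v, 'a) path = "'v \<times> 'a list"

definition valid_path :: "('v, 'a) quiver \<Rightarrow> ('v, 'a) path \<Rightarrow> bool" where
  "valid_path Q p \<longleftrightarrow> fst p \<in> verts Q \<and> set (snd p) \<subseteq> arrs Q \<and>
     (snd p \<noteq> [] \<longrightarrow> src Q (hd (snd p)) = fst p) \<and>
     (\<forall>i. Suc i < length (snd p) \<longrightarrow> tgt Q (snd p ! i) = src Q (snd p ! Suc i))"

definition ps :: "('v, 'a) path \<Rightarrow> 'v" where
  "ps p = fst p"

definition pt :: "('v, 'a) quiver \<Rightarrow> ('v, 'a) path \<Rightarrow> 'v" where
  "pt Q p = (if snd p = [] then fst p else tgt Q (last (snd p)))"

definition paths_len :: "('v, 'a) quiver \<Rightarrow> nat \<Rightarrow> ('v, 'a) path set" where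
  "paths_len Q n = {p. valid_path Q p \<and> length (snd p) = n}"

definition apath :: "('v, 'a) quiver \<Rightarrow> 'a \<Rightarrow> ('v, 'a) path" where
  "apath Q a = (src Q a, [a])"

definition subpath :: "('v, 'a) quiver \<Rightarrow> ('v, 'a) path \<Rightarrow> ('v, 'a) path \<Rightarrow> bool" where
  "subpath Q g d \<longleftrightarrow> (\<exists>xs ys. snd d = xs @ snd g @ ys \<and> fst g = pt Q (fst d, xs))"

definition monomial_relations :: "('v, 'a) quiver \<Rightarrow> ('v, 'a) path set \<Rightarrow> bool" where
  "monomial_relations Q Z \<longleftrightarrow>
     (\<forall>p\<in>Z. valid_path Q p \<and> length (snd p) \<ge> 2) \<and>
     (\<forall>p\<in>Z. \<forall>q\<in>Z. subpath Q q p \<longrightarrow> q = p)"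

definition Bset :: "('v, 'a) quiver \<Rightarrow> ('v, 'a) path set \<Rightarrow> ('v, 'a) path set" where
  "Bset Q Z = {p. valid_path Q p \<and> \<not> (\<exists>z\<in>Z. subpath Q z p)}"

definition parallel :: "('v, 'a) quiver \<Rightarrow> ('v, 'a) path \<Rightarrow> ('v, 'a) path \<Rightarrow> bool" where
  "parallel Q p q \<longleftrightarrow> ps p = ps q \<and> pt Q p = pt Q q"

definition ppairs :: "('v, 'a) quiver \<Rightarrow> ('v, 'a) path set \<Rightarrow> ('v, 'a) path set
    \<Rightarrow> (('v, 'a) path \<times> ('v, 'a) path) set" where
  "ppairs Q X Y = {(e, g). e \<in> X \<and> g \<in> Y \<and> parallel Q e g}"

section \<open>Vector spaces with a given basis, as finitely supported coefficient functions\<close>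

definition vecs :: "'x set \<Rightarrow> ('x \<Rightarrow> 'k::zero) set" where
  "vecs X = {f. \<forall>u. u \<notin> X \<longrightarrow> f u = 0}"

definition vzero :: "'x \<Rightarrow> 'k::zero" where "vzero = (\<lambda>_. 0)"
definition vadd :: "('x \<Rightarrow> 'k::plus) \<Rightarrow> ('x \<Rightarrow> 'k) \<Rightarrow> 'x \<Rightarrow> 'k" where
  "vadd f g = (\<lambda>u. f u + g u)"
definition vsub :: "('x \<Rightarrow> 'k::minus) \<Rightarrow> ('x \<Rightarrow> 'k) \<Rightarrow> 'x \<Rightarrow> 'k" where
  "vsub f g = (\<lambda>u. f u - g u)"
definition vscale :: "'k::times \<Rightarrow> ('x \<Rightarrow> 'k) \<Rightarrow> 'x \<Rightarrow> 'k" where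
  "vscale c f = (\<lambda>u. c * f u)"

type_synonym ('v, 'a, 'k) pvec = "('v, 'a) path \<times> ('v, 'a) path \<Rightarrow> 'k"
type_synonym ('v, 'a, 'k) lam = "('v, 'a) path \<Rightarrow> 'k"

section \<open>The monomial algebra Lambda = kQ/<Z>, realised on its basis B\<close>

text \<open>Product of basis paths p * q in kQ = concatenation "first q, then p" (if composable);
  in Lambda it is kept iff the result lies in B (otherwise it lies in the ideal <Z>).\<close>
definition lam_mult :: "('v, 'a) quiver \<Rightarrow> ('v, 'a) path set \<Rightarrow>
    ('v, 'a, 'k::field) lam \<Rightarrow> ('v, 'a, 'k) lam \<Rightarrow> ('v, 'a, 'k) lam" where
  "lam_mult Q Z f g = (\<lambda>z. if z \<in> Bset Q Z then
     (\<Sum>p\<in>Bset Q Z. \<Sum>q\<in>Bset Q Z.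
        if pt Q q = ps p \<and> (fst q, snd q @ snd p) = z then f p * g q else 0)
     else 0)"

definition Lam :: "('v, 'a) quiver \<Rightarrow> ('v, 'a) path set \<Rightarrow> ('v, 'a, 'k::field) lam set" where
  "Lam Q Z = vecs (Bset Q Z)"

text \<open>k-linear derivations of Lambda (as maps on Lambda, extended by 0 outside Lambda)\<close>
definition Der :: "('v, 'a) quiver \<Rightarrow> ('v, 'a) path set \<Rightarrow>
    (('v, 'a, 'k::field) lam \<Rightarrow> ('v, 'a, 'k) lam) set" where
  "Der Q Z = {D. (\<forall>x\<in>Lam Q Z. D x \<in> Lam Q Z) \<and> (\<forall>x. x \<notin> Lam Q Z \<longrightarrow> D x = vzero) \<and>
      (\<forall>x\<in>Lam Q Z. \<forall>y\<in>Lam Q Z. D (vadd x y) = vadd (D x) (D y)) \<and>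
      (\<forall>c. \<forall>x\<in>Lam Q Z. D (vscale c x) = vscale c (D x)) \<and>
      (\<forall>x\<in>Lam Q Z. \<forall>y\<in>Lam Q Z.
         D (lam_mult Q Z x y) = vadd (lam_mult Q Z (D x) y) (lam_mult Q Z x (D y)))}"

definition Ad :: "('v, 'a) quiver \<Rightarrow> ('v, 'a) path set \<Rightarrow>
    (('v, 'a, 'k::field) lam \<Rightarrow> ('v, 'a, 'k) lam) set" where
  "Ad Q Z = {(\<lambda>x. if x \<in> Lam Q Z then vsub (lam_mult Q Z a x) (lam_mult Q Z x a) else vzero)
             | a. a \<in> Lam Q Z}"

definition madd :: "('x \<Rightarrow> 'y \<Rightarrow> 'k::plus) \<Rightarrow> ('x \<Rightarrow> 'y \<Rightarrow> 'k) \<Rightarrow> 'x \<Rightarrow> 'y \<Rightarrow> 'k" where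
  "madd F G = (\<lambda>z. vadd (F z) (G z))"
definition msub :: "('x \<Rightarrow> 'y \<Rightarrow> 'k::minus) \<Rightarrow> ('x \<Rightarrow> 'y \<Rightarrow> 'k) \<Rightarrow> 'x \<Rightarrow> 'y \<Rightarrow> 'k" where
  "msub F G = (\<lambda>z. vsub (F z) (G z))"
definition mscale :: "'k::times \<Rightarrow> ('x \<Rightarrow> 'y \<Rightarrow> 'k) \<Rightarrow> 'x \<Rightarrow> 'y \<Rightarrow> 'k" where
  "mscale c F = (\<lambda>z. vscale c (F z))"
definition mcomm :: "(('y \<Rightarrow> 'k::minus) \<Rightarrow> ('y \<Rightarrow> 'k)) \<Rightarrow> (('y \<Rightarrow> 'k) \<Rightarrow> ('y \<Rightarrow> 'k))
    \<Rightarrow> ('y \<Rightarrow> 'k) \<Rightarrow> ('y \<Rightarrow> 'k)" where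
  "mcomm F G = (\<lambda>z. vsub (F (G z)) (G (F z)))"

definition repl :: "('v, 'a) path \<Rightarrow> nat \<Rightarrow> ('v, 'a) path \<Rightarrow> ('v, 'a) path" where
  "repl e i g = (fst e, take i (snd e) @ snd g @ drop (Suc i) (snd e))"

text \<open>coefficient of the path z in e^(a,g): the number of occurrences of the arrow a in e
  whose replacement by g yields z, provided z lies in B\<close>
definition subst_coeff :: "('v, 'a) quiver \<Rightarrow> ('v, 'a) path set \<Rightarrow>
    ('v, 'a) path \<Rightarrow> 'a \<Rightarrow> ('v, 'a) path \<Rightarrow> ('v, 'a) path \<Rightarrow> 'k::field" where
  "subst_coeff Q Z e a g z = of_nat (card {i. i < length (snd e) \<and> snd e ! i = a \<and>
      repl e i g = z \<and> z \<in> Bset Q Z})"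

abbreviation P0 :: "('v, 'a) quiver \<Rightarrow> ('v, 'a) path set \<Rightarrow> (('v, 'a) path \<times> ('v, 'a) path) set" where
  "P0 Q Z \<equiv> ppairs Q (paths_len Q 0) (Bset Q Z)"
abbreviation P1 :: "('v, 'a) quiver \<Rightarrow> ('v, 'a) path set \<Rightarrow> (('v, 'a) path \<times> ('v, 'a) path) set" where
  "P1 Q Z \<equiv> ppairs Q (paths_len Q 1) (Bset Q Z)"

text \<open>psi_0 on a basis element (e, g) of k(Q_0//B), evaluated at (q, z):
  (a, a g) for arrows a starting at e, minus (a, g a) for arrows a ending at e\<close>
definition psi0_b :: "('v, 'a) quiver \<Rightarrow> ('v, 'a) path set \<Rightarrow>
    ('v, 'a) path \<times> ('v, 'a) path \<Rightarrow> ('v, 'a, 'k::field) pvec" where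
  "psi0_b Q Z eg = (\<lambda>(q, z).
     (if \<exists>a\<in>arrs Q. q = apath Q a \<and> src Q a = fst (fst eg) \<and>
          z = (fst (snd eg), snd (snd eg) @ [a]) \<and> z \<in> Bset Q Z then 1 else 0)
   - (if \<exists>a\<in>arrs Q. q = apath Q a \<and> tgt Q a = fst (fst eg) \<and>
          z = (src Q a, a # snd (snd eg)) \<and> z \<in> Bset Q Z then 1 else 0))"

definition psi0 :: "('v, 'a) quiver \<Rightarrow> ('v, 'a) path set \<Rightarrow>
    ('v, 'a, 'k::field) pvec \<Rightarrow> ('v, 'a, 'k) pvec" where
  "psi0 Q Z x = (\<lambda>w. \<Sum>u\<in>P0 Q Z. x u * psi0_b Q Z u w)"

text \<open>psi_1 (a, g) = sum over p in Z of (p, p^(a,g)), extended linearly\<close>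
definition psi1 :: "('v, 'a) quiver \<Rightarrow> ('v, 'a) path set \<Rightarrow>
    ('v, 'a, 'k::field) pvec \<Rightarrow> ('v, 'a, 'k) pvec" where
  "psi1 Q Z x = (\<lambda>(p, z). if p \<in> Z then
      (\<Sum>u\<in>P1 Q Z. x u * subst_coeff Q Z p (hd (snd (fst u))) (snd u) z) else 0)"

definition Ker1 :: "('v, 'a) quiver \<Rightarrow> ('v, 'a) path set \<Rightarrow> ('v, 'a, 'k::field) pvec set" where
  "Ker1 Q Z = {x \<in> vecs (P1 Q Z). psi1 Q Z x = vzero}"

definition Im0 :: "('v, 'a) quiver \<Rightarrow> ('v, 'a) path set \<Rightarrow> ('v, 'a, 'k::field) pvec set" where
  "Im0 Q Z = psi0 Q Z ` vecs (P0 Q Z)"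

text \<open>[(a,g),(b,e)] = (b, e^(a,g)) - (a, g^(b,e)) on basis elements, evaluated at (q, z)\<close>
definition br_b :: "('v, 'a) quiver \<Rightarrow> ('v, 'a) path set \<Rightarrow>
    ('v, 'a) path \<times> ('v, 'a) path \<Rightarrow> ('v, 'a) path \<times> ('v, 'a) path \<Rightarrow> ('v, 'a, 'k::field) pvec" where
  "br_b Q Z ag be = (\<lambda>(q, z).
      (if q = fst be then subst_coeff Q Z (snd be) (hd (snd (fst ag))) (snd ag) z else 0)
    - (if q = fst ag then subst_coeff Q Z (snd ag) (hd (snd (fst be))) (snd be) z else 0))"

definition lie_br :: "('v, 'a) quiver \<Rightarrow> ('v, 'a) path set \<Rightarrow>
    ('v, 'a, 'k::field) pvec \<Rightarrow> ('v, 'a, 'k) pvec \<Rightarrow> ('v, 'a, 'k) pvec" where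
  "lie_br Q Z x y = (\<lambda>w. \<Sum>u\<in>P1 Q Z. \<Sum>v\<in>P1 Q Z. x u * y v * br_b Q Z u v w)"

end

theory Submission
  imports Defs
begin

text \<open>An element \<open>x \<in> k(Q\<^sub>1//B)\<close> prescribes the image of every arrow, and substituting these
  images arrow by arrow gives \<open>\<delta>\<^sub>x(w) = \<Sum> x(a,\<gamma>) w\<^bsup>(a,\<gamma>)\<^esup>\<close> for every path \<open>w\<close>, which obeys
  the Leibniz rule under concatenation. The condition \<open>\<psi>\<^sub>1 x = 0\<close> says precisely that \<open>\<delta>\<^sub>x\<close>
  sends the relations into \<open>\<langle>Z\<rangle>\<close>, hence all of \<open>\<langle>Z\<rangle>\<close> into \<open>\<langle>Z\<rangle>\<close>, so \<open>\<delta>\<^sub>x\<close> induces a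
  derivation \<open>\<Phi>(x)\<close> of \<open>\<Lambda>\<close>; conversely a derivation vanishing on the vertices is determined
  by its values on the arrows, and these form an element of \<open>Ker \<psi>\<^sub>1\<close>. Every derivation becomes
  one vanishing on the vertices after subtracting \<open>ad a\<close>, where \<open>a\<close> collects the coefficients of
  \<open>D(e\<^sub>v)\<close> on paths starting at \<open>v\<close>. An inner derivation vanishes on the vertices iff \<open>a\<close> is a
  combination of cycles, and then its values on the arrows are \<open>\<psi>\<^sub>0\<close> of the cycle
  coefficients of \<open>a\<close>; this identifies \<open>Im \<psi>\<^sub>0\<close> with the inner derivations. Finally the bracket
  on \<open>k(Q\<^sub>1//B)\<close> is the commutator of \<open>\<Phi>(x)\<close> and \<open>\<Phi>(y)\<close> read off on the arrows, and a
  derivation vanishing on the vertices is determined there.\<close>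

fun walk :: "('v, 'a) quiver \<Rightarrow> 'v \<Rightarrow> 'a list \<Rightarrow> bool" where
  "walk Q v [] \<longleftrightarrow> v \<in> verts Q"
| "walk Q v (a # as) \<longleftrightarrow> v \<in> verts Q \<and> a \<in> arrs Q \<and> src Q a = v \<and> walk Q (tgt Q a) as"

lemma pt_Nil [simp]: "pt Q (v, []) = v"
  by (simp add: pt_def)

lemma pt_Cons [simp]: "pt Q (v, a # as) = pt Q (tgt Q a, as)"
  by (simp add: pt_def)

lemma pt_append: "pt Q (v, xs @ ys) = pt Q (pt Q (v, xs), ys)"
  by (induction xs arbitrary: v) auto

lemma walk_append: "walk Q v (xs @ ys) \<longleftrightarrow> walk Q v xs \<and> walk Q (pt Q (v, xs)) ys"
  by (induction xs arbitrary: v) (auto elim: walk.elims)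

lemma walk_start: "walk Q v xs \<Longrightarrow> v \<in> verts Q"
  by (cases xs) auto

lemma valid_path_iff_walk:
  assumes "finite_quiver Q"
  shows "valid_path Q (v, xs) \<longleftrightarrow> walk Q v xs"
proof (induction xs arbitrary: v)
  case Nil
  then show ?case by (simp add: valid_path_def)
next
  case (Cons a as)
  have "valid_path Q (v, a # as) \<longleftrightarrow>
      v \<in> verts Q \<and> a \<in> arrs Q \<and> src Q a = v \<and> valid_path Q (tgt Q a, as)"
    using assms by (auto simp: valid_path_def finite_quiver_def hd_conv_nth nth_Cons split: nat.splits)
  with Cons.IH show ?case by simp
qed

lemma pt_take_nth: "walk Q v xs \<Longrightarrow> i < length xs \<Longrightarrow> pt Q (v, take i xs) = src Q (xs ! i)"
  by (induction xs arbitrary: v i) (auto simp: take_Cons' nth_Cons')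

lemma pt_replace_arrow:
  assumes "walk Q v xs" "i < length xs" "xs ! i = a" "pt Q (src Q a, gs) = tgt Q a"
  shows "pt Q (v, take i xs @ gs @ drop (Suc i) xs) = pt Q (v, xs)"
proof -
  have "xs = take i xs @ [a] @ drop (Suc i) xs"
    using assms(2,3) id_take_nth_drop by fastforce
  then have "pt Q (v, xs) = pt Q (tgt Q a, drop (Suc i) xs)"
    using pt_take_nth[OF assms(1,2)] assms(3) by (metis pt_Cons pt_Nil pt_append)
  then show ?thesis
    using pt_take_nth[OF assms(1,2)] assms(3,4) by (simp add: pt_append)
qed

lemma subpath_append_right: "subpath Q g (v, xs) \<Longrightarrow> subpath Q g (v, xs @ ys)"
  unfolding subpath_def by force

lemma subpath_append_left: "subpath Q g (pt Q (v, xs), ys) \<Longrightarrow> subpath Q g (v, xs @ ys)"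
  unfolding subpath_def by (metis append.assoc fst_conv pt_append snd_conv)

lemma subpath_infix: "fst g = pt Q (v, xs) \<Longrightarrow> subpath Q g (v, xs @ snd g @ ys)"
  unfolding subpath_def by auto

text \<open>\<open>pcat q p\<close> traverses \<open>q\<close> first and then \<open>p\<close>: it is the product \<open>p q\<close> of \<open>kQ\<close>.\<close>
definition pcat :: "('v, 'a) path \<Rightarrow> ('v, 'a) path \<Rightarrow> ('v, 'a) path" where
  "pcat q p = (fst q, snd q @ snd p)"

definition basis_vec :: "('v, 'a) path \<Rightarrow> ('v, 'a, 'k::field) lam" where
  "basis_vec p = (\<lambda>z. if z = p then 1 else 0)"

lemma fst_pcat [simp]: "fst (pcat q p) = fst q"
  by (simp add: pcat_def)

lemma pt_pcat: "pt Q q = fst p \<Longrightarrow> pt Q (pcat q p) = pt Q p"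
  by (simp add: pcat_def pt_append)

lemma pcat_assoc: "pcat (pcat r q) p = pcat r (pcat q p)"
  by (simp add: pcat_def)

lemma fst_repl [simp]: "fst (repl e i g) = fst e"
  by (simp add: repl_def)

lemma repl_pcat_left: "i < length (snd q) \<Longrightarrow> repl (pcat q p) i g = pcat (repl q i g) p"
  by (simp add: repl_def pcat_def)

lemma repl_pcat_right: "repl (pcat q p) (length (snd q) + j) g = pcat q (repl p j g)"
  by (simp add: repl_def pcat_def)

lemma nth_pcat_left: "i < length (snd q) \<Longrightarrow> snd (pcat q p) ! i = snd q ! i"
  by (simp add: pcat_def nth_append)

lemma nth_pcat_right: "snd (pcat q p) ! (length (snd q) + j) = snd p ! j"
  by (simp add: pcat_def nth_append)

lemma sum_if_unique:
  assumes "finite S" "\<And>q. P q \<Longrightarrow> q = r"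
  shows "(\<Sum>q\<in>S. if P q then c q else 0) = (if r \<in> S \<and> P r then c r else 0)"
proof -
  have "(if P q then c q else 0) = (if q = r then (if P r then c r else 0) else 0)" for q
    using assms(2)[of q] by (cases "P q") auto
  then show ?thesis
    using assms(1) by simp
qed

lemma sum_lessThan_add: "(\<Sum>i<m + n. f i) = (\<Sum>i<m. f i) + (\<Sum>j<n. f (m + j))"
  for f :: "nat \<Rightarrow> 'b::comm_monoid_add"
  by (induction n) (simp_all add: add.assoc)

locale monomial_algebra =
  fixes Q :: "('v, 'a) quiver" and Z :: "('v, 'a) path set"
  assumes finite_Q: "finite_quiver Q"
    and relations: "monomial_relations Q Z"
    and finite_B: "finite (Bset Q Z)"
begin

abbreviation "B \<equiv> Bset Q Z"

lemma Bset_iff: "p \<in> B \<longleftrightarrow> walk Q (fst p) (snd p) \<and> \<not> (\<exists>g\<in>Z. subpath Q g p)"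
  using valid_path_iff_walk[OF finite_Q, of "fst p" "snd p"] by (simp add: Bset_def)

lemma Bset_walk: "p \<in> B \<Longrightarrow> walk Q (fst p) (snd p)"
  using Bset_iff by blast

lemma relation_walk: "g \<in> Z \<Longrightarrow> walk Q (fst g) (snd g)"
  using relations valid_path_iff_walk[OF finite_Q, of "fst g" "snd g"]
  by (simp add: monomial_relations_def)

lemma relation_length: "g \<in> Z \<Longrightarrow> length (snd g) \<ge> 2"
  using relations by (simp add: monomial_relations_def)

lemma src_vert: "a \<in> arrs Q \<Longrightarrow> src Q a \<in> verts Q"
  and tgt_vert: "a \<in> arrs Q \<Longrightarrow> tgt Q a \<in> verts Q"
  using finite_Q by (simp_all add: finite_quiver_def)

lemma Bset_prefix: "(v, xs @ ys) \<in> B \<Longrightarrow> (v, xs) \<in> B"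
  unfolding Bset_iff by (auto simp: walk_append dest: subpath_append_right)

lemma Bset_suffix: "(v, xs @ ys) \<in> B \<Longrightarrow> (pt Q (v, xs), ys) \<in> B"
  unfolding Bset_iff by (auto simp: walk_append dest: subpath_append_left)

lemma infix_relation_notin_Bset: "g \<in> Z \<Longrightarrow> fst g = pt Q (v, xs) \<Longrightarrow> (v, xs @ snd g @ ys) \<notin> B"
  using subpath_infix[of g Q v xs ys] Bset_iff by blast

lemma pcat_in_Bset_D:
  assumes "pcat q p \<in> B" "pt Q q = fst p"
  shows "q \<in> B" "p \<in> B"
  using Bset_prefix[of "fst q" "snd q" "snd p"] Bset_suffix[of "fst q" "snd q" "snd p"] assms
  by (simp_all add: pcat_def)

lemma walk_pcat: "walk Q (fst q) (snd q) \<Longrightarrow> walk Q (fst p) (snd p) \<Longrightarrow> pt Q q = fst p \<Longrightarrow>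
    walk Q (fst (pcat q p)) (snd (pcat q p))"
  by (simp add: pcat_def walk_append)

lemma vertex_in_Bset: "v \<in> verts Q \<Longrightarrow> (v, []) \<in> B"
  using Bset_iff relation_length unfolding subpath_def by fastforce

lemma arrow_in_Bset:
  assumes "a \<in> arrs Q"
  shows "apath Q a \<in> B"
proof -
  have "\<not> subpath Q g (src Q a, [a])" if "g \<in> Z" for g
  proof
    assume "subpath Q g (src Q a, [a])"
    then obtain xs ys where "[a] = xs @ snd g @ ys"
      unfolding subpath_def by auto
    then have "length [a] = length xs + length (snd g) + length ys"
      by simp
    then have "length (snd g) \<le> 1"
      by simp
    with relation_length[OF that] show False
      by simp
  qed
  then show ?thesis
    using Bset_iff assms tgt_vert src_vert by (simp add: apath_def)
qed

lemma P1_iff: "u \<in> P1 Q Z \<longleftrightarrow>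
    (\<exists>a\<in>arrs Q. fst u = apath Q a \<and> snd u \<in> B \<and> fst (snd u) = src Q a \<and> pt Q (snd u) = tgt Q a)"
proof
  assume "u \<in> P1 Q Z"
  then obtain q a where u: "fst u = q" "snd q = [a]" "valid_path Q q" "snd u \<in> B"
      "parallel Q q (snd u)"
    unfolding ppairs_def paths_len_def by (auto simp: length_Suc_conv)
  then have "walk Q (fst q) [a]"
    using valid_path_iff_walk[OF finite_Q, of "fst q" "snd q"] by (metis prod.collapse)
  then have "a \<in> arrs Q" "q = apath Q a"
    using u(2) by (auto simp: apath_def prod_eq_iff)
  then show "\<exists>a\<in>arrs Q. fst u = apath Q a \<and> snd u \<in> B \<and> fst (snd u) = src Q a \<and> pt Q (snd u) = tgt Q a"
    using u by (intro bexI[of _ a]) (auto simp: parallel_def ps_def apath_def)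
next
  assume "\<exists>a\<in>arrs Q. fst u = apath Q a \<and> snd u \<in> B \<and> fst (snd u) = src Q a \<and> pt Q (snd u) = tgt Q a"
  then obtain a where a: "a \<in> arrs Q" "fst u = apath Q a" "snd u \<in> B" "fst (snd u) = src Q a"
      "pt Q (snd u) = tgt Q a"
    by blast
  have "apath Q a \<in> paths_len Q 1"
    using arrow_in_Bset[OF a(1)] by (simp add: paths_len_def apath_def Bset_def)
  with a show "u \<in> P1 Q Z"
    unfolding ppairs_def by (cases u) (auto simp: parallel_def ps_def apath_def)
qed

lemma finite_P1: "finite (P1 Q Z)"
proof -
  have "P1 Q Z \<subseteq> apath Q ` arrs Q \<times> B"
    using P1_iff by force
  moreover have "finite (arrs Q)"
    using finite_Q by (simp add: finite_quiver_def)
  ultimately show ?thesis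
    using finite_B finite_subset by blast
qed

lemma P0_iff: "u \<in> P0 Q Z \<longleftrightarrow> snd u \<in> B \<and> fst (snd u) = pt Q (snd u) \<and> fst u = (fst (snd u), [])"
proof
  assume "u \<in> P0 Q Z"
  then have "snd (fst u) = []" "snd u \<in> B" "fst (fst u) = fst (snd u)" "pt Q (fst u) = pt Q (snd u)"
    unfolding ppairs_def paths_len_def parallel_def ps_def by auto
  then show "snd u \<in> B \<and> fst (snd u) = pt Q (snd u) \<and> fst u = (fst (snd u), [])"
    by (metis pt_Nil prod.collapse)
next
  assume u: "snd u \<in> B \<and> fst (snd u) = pt Q (snd u) \<and> fst u = (fst (snd u), [])"
  then have "fst u \<in> paths_len Q 0"
    using walk_start[OF Bset_walk, of "snd u"] by (simp add: paths_len_def valid_path_def)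
  moreover have "parallel Q (fst u) (snd u)"
    using u by (simp add: parallel_def ps_def)
  ultimately show "u \<in> P0 Q Z"
    using u unfolding ppairs_def by (cases u) simp
qed

end

section \<open>Substituting paths for arrows\<close>

text \<open>\<open>subst_sum Q Z x w z\<close> is the coefficient of \<open>z\<close> in \<open>\<delta>\<^sub>x(w) = \<Sum> x(a,\<gamma>) w\<^bsup>(a,\<gamma>)\<^esup>\<close>,
  and \<open>subst_at Q Z w i u z\<close> says that the \<open>i\<close>-th arrow of \<open>w\<close> contributes to it via
  \<open>u = (a,\<gamma>)\<close>.\<close>
definition subst_at :: "('v, 'a) quiver \<Rightarrow> ('v, 'a) path set \<Rightarrow> ('v, 'a) path \<Rightarrow> nat \<Rightarrow>
    ('v, 'a) path \<times> ('v, 'a) path \<Rightarrow> ('v, 'a) path \<Rightarrow> bool" where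
  "subst_at Q Z w i u z \<longleftrightarrow> snd w ! i = hd (snd (fst u)) \<and> repl w i (snd u) = z \<and> z \<in> Bset Q Z"

definition subst_sum :: "('v, 'a) quiver \<Rightarrow> ('v, 'a) path set \<Rightarrow> ('v, 'a, 'k::field) pvec \<Rightarrow>
    ('v, 'a) path \<Rightarrow> ('v, 'a) path \<Rightarrow> 'k" where
  "subst_sum Q Z x w z = (\<Sum>u\<in>P1 Q Z. x u * subst_coeff Q Z w (hd (snd (fst u))) (snd u) z)"

lemma subst_coeff_eq_sum:
  "subst_coeff Q Z w a g z =
    (\<Sum>i<length (snd w). if snd w ! i = a \<and> repl w i g = z \<and> z \<in> Bset Q Z then 1 else 0)"
proof -
  have "{i. i < length (snd w) \<and> snd w ! i = a \<and> repl w i g = z \<and> z \<in> Bset Q Z}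
      = {i \<in> {..<length (snd w)}. snd w ! i = a \<and> repl w i g = z \<and> z \<in> Bset Q Z}"
    by auto
  then show ?thesis
    unfolding subst_coeff_def by (simp add: sum.inter_filter[symmetric])
qed

lemma subst_sum_eq:
  "subst_sum Q Z x w z = (\<Sum>u\<in>P1 Q Z. \<Sum>i<length (snd w). if subst_at Q Z w i u z then x u else 0)"
  unfolding subst_sum_def subst_at_def subst_coeff_eq_sum sum_distrib_left
  by (intro sum.cong) simp_all

lemma psi1_eq_subst_sum: "p \<in> Z \<Longrightarrow> psi1 Q Z x (p, z) = subst_sum Q Z x p z"
  by (simp add: psi1_def subst_sum_def)

lemma subst_sum_vadd: "subst_sum Q Z (vadd x y) w z = subst_sum Q Z x w z + subst_sum Q Z y w z"
  by (simp add: subst_sum_def vadd_def sum.distrib distrib_right)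

lemma subst_sum_vscale: "subst_sum Q Z (vscale c x) w z = c * subst_sum Q Z x w z"
  by (simp add: subst_sum_def vscale_def sum_distrib_left mult.assoc)

lemma subst_sum_vertex: "subst_sum Q Z x (v, []) z = 0"
  by (simp add: subst_sum_eq)

lemma subst_sum_notin_Bset: "z \<notin> Bset Q Z \<Longrightarrow> subst_sum Q Z x w z = 0"
  by (simp add: subst_sum_eq subst_at_def)

context monomial_algebra
begin

lemma pt_repl:
  assumes u: "u \<in> P1 Q Z" and "walk Q (fst q) (snd q)" "i < length (snd q)"
    and "snd q ! i = hd (snd (fst u))"
  shows "pt Q (repl q i (snd u)) = pt Q q"
proof -
  obtain a where a: "fst u = apath Q a" "fst (snd u) = src Q a" "pt Q (snd u) = tgt Q a"
    using P1_iff[THEN iffD1, OF u] by blast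
  have "hd (snd (fst u)) = a" "(src Q a, snd (snd u)) = snd u"
    using a(1,2) by (simp_all add: apath_def prod_eq_iff)
  then have "pt Q (src Q (hd (snd (fst u))), snd (snd u)) = tgt Q (hd (snd (fst u)))"
    using a(3) by simp
  then show ?thesis
    using pt_replace_arrow[OF assms(2-4)] by (simp add: repl_def)
qed

lemma subst_at_parallel:
  assumes "u \<in> P1 Q Z" "walk Q (fst q) (snd q)" "i < length (snd q)" "subst_at Q Z q i u z"
  shows "fst z = fst q \<and> pt Q z = pt Q q \<and> z \<in> B"
  using assms pt_repl[OF assms(1-3)] unfolding subst_at_def by auto

lemma subst_sum_parallel:
  assumes "walk Q (fst q) (snd q)" "subst_sum Q Z x q z \<noteq> 0"
  shows "fst z = fst q \<and> pt Q z = pt Q q \<and> z \<in> B"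
proof -
  obtain u i where "u \<in> P1 Q Z" "i < length (snd q)" "subst_at Q Z q i u z"
    using assms(2) unfolding subst_sum_eq
    by (auto elim!: sum.not_neutral_contains_not_neutral split: if_splits)
  then show ?thesis
    using subst_at_parallel assms(1) by blast
qed

lemma subst_sum_arrow:
  assumes a: "a \<in> arrs Q"
  shows "subst_sum Q Z x (apath Q a) z = (if (apath Q a, z) \<in> P1 Q Z then x (apath Q a, z) else 0)"
proof -
  have unique: "u = (apath Q a, z)" if u: "u \<in> P1 Q Z" "subst_at Q Z (apath Q a) 0 u z" for u
  proof -
    obtain b where b: "fst u = apath Q b" "fst (snd u) = src Q b"
      using P1_iff[THEN iffD1, OF u(1)] by blast
    with u(2) have "b = a" "z = snd u"
      by (auto simp: subst_at_def apath_def repl_def prod_eq_iff)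
    with b show ?thesis
      by (simp add: prod_eq_iff)
  qed
  have "subst_sum Q Z x (apath Q a) z = (\<Sum>u\<in>P1 Q Z. if subst_at Q Z (apath Q a) 0 u z then x u else 0)"
    by (simp add: subst_sum_eq apath_def)
  also have "\<dots> = (\<Sum>u\<in>P1 Q Z. if u \<in> P1 Q Z \<and> subst_at Q Z (apath Q a) 0 u z then x u else 0)"
    by (rule sum.cong) auto
  also have "\<dots> = (if (apath Q a, z) \<in> P1 Q Z \<and> (apath Q a, z) \<in> P1 Q Z
      \<and> subst_at Q Z (apath Q a) 0 (apath Q a, z) z then x (apath Q a, z) else 0)"
    by (rule sum_if_unique[OF finite_P1]) (metis unique)
  also have "\<dots> = (if (apath Q a, z) \<in> P1 Q Z then x (apath Q a, z) else 0)"
  proof -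
    have "subst_at Q Z (apath Q a) 0 (apath Q a, z) z" if az: "(apath Q a, z) \<in> P1 Q Z"
    proof -
      obtain b where "apath Q a = apath Q b" "z \<in> B" "fst z = src Q b"
        using P1_iff[THEN iffD1, OF az] by auto
      then show ?thesis
        by (simp add: subst_at_def apath_def repl_def prod_eq_iff)
    qed
    then show ?thesis
      by auto
  qed
  finally show ?thesis .
qed

lemma sum_subst_at_pcat_left:
  assumes u: "u \<in> P1 Q Z" and q: "walk Q (fst q) (snd q)" and c: "pt Q q = fst p"
    and z: "z \<in> B" and i: "i < length (snd q)"
  shows "(\<Sum>q'\<in>B. if (pt Q q' = fst p \<and> pcat q' p = z) \<and> subst_at Q Z q i u q' then x u else 0)
       = (if subst_at Q Z (pcat q p) i u z then x u else 0)"
proof -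
  let ?r = "repl q i (snd u)"
  have "(\<Sum>q'\<in>B. if (pt Q q' = fst p \<and> pcat q' p = z) \<and> subst_at Q Z q i u q' then x u else 0)
      = (if ?r \<in> B \<and> ((pt Q ?r = fst p \<and> pcat ?r p = z) \<and> subst_at Q Z q i u ?r) then x u else 0)"
    by (rule sum_if_unique[OF finite_B]) (simp add: subst_at_def)
  also have "?r \<in> B \<and> ((pt Q ?r = fst p \<and> pcat ?r p = z) \<and> subst_at Q Z q i u ?r)
      \<longleftrightarrow> subst_at Q Z (pcat q p) i u z"
  proof
    assume "subst_at Q Z (pcat q p) i u z"
    then have r: "snd q ! i = hd (snd (fst u))" "pcat ?r p = z"
      using i by (simp_all add: subst_at_def nth_pcat_left repl_pcat_left)
    have "pt Q ?r = fst p"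
      using pt_repl[OF u q i r(1)] c by simp
    moreover then have "?r \<in> B"
      using pcat_in_Bset_D(1) r(2) z by blast
    ultimately show "?r \<in> B \<and> ((pt Q ?r = fst p \<and> pcat ?r p = z) \<and> subst_at Q Z q i u ?r)"
      using r by (simp add: subst_at_def)
  qed (use z i in \<open>simp add: subst_at_def nth_pcat_left repl_pcat_left\<close>)
  finally show ?thesis .
qed

lemma sum_subst_at_pcat_right:
  assumes c: "pt Q q = fst p" and z: "z \<in> B" and j: "j < length (snd p)"
  shows "(\<Sum>p'\<in>B. if (fst p' = pt Q q \<and> pcat q p' = z) \<and> subst_at Q Z p j u p' then x u else 0)
       = (if subst_at Q Z (pcat q p) (length (snd q) + j) u z then x u else 0)"
proof -
  let ?r = "repl p j (snd u)"
  have "(\<Sum>p'\<in>B. if (fst p' = pt Q q \<and> pcat q p' = z) \<and> subst_at Q Z p j u p' then x u else 0)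
      = (if ?r \<in> B \<and> ((fst ?r = pt Q q \<and> pcat q ?r = z) \<and> subst_at Q Z p j u ?r) then x u else 0)"
    by (rule sum_if_unique[OF finite_B]) (simp add: subst_at_def)
  also have "?r \<in> B \<and> ((fst ?r = pt Q q \<and> pcat q ?r = z) \<and> subst_at Q Z p j u ?r)
      \<longleftrightarrow> subst_at Q Z (pcat q p) (length (snd q) + j) u z"
  proof
    assume "subst_at Q Z (pcat q p) (length (snd q) + j) u z"
    then have r: "snd p ! j = hd (snd (fst u))" "pcat q ?r = z"
      by (simp_all add: subst_at_def nth_pcat_right repl_pcat_right)
    then have "?r \<in> B"
      using pcat_in_Bset_D(2)[of q ?r] c z by simp
    then show "?r \<in> B \<and> ((fst ?r = pt Q q \<and> pcat q ?r = z) \<and> subst_at Q Z p j u ?r)"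
      using r c by (simp add: subst_at_def)
  qed (use z in \<open>simp add: subst_at_def nth_pcat_right repl_pcat_right\<close>)
  finally show ?thesis .
qed

text \<open>The Leibniz rule for \<open>\<delta>\<^sub>x\<close> on paths: the arrows of \<open>p q\<close> are those of \<open>q\<close> followed by
  those of \<open>p\<close>.\<close>
lemma subst_sum_pcat:
  assumes q: "walk Q (fst q) (snd q)" and c: "pt Q q = fst p" and z: "z \<in> B"
  shows "subst_sum Q Z x (pcat q p) z =
     (\<Sum>p'\<in>B. if fst p' = pt Q q \<and> pcat q p' = z then subst_sum Q Z x p p' else 0)
   + (\<Sum>q'\<in>B. if pt Q q' = fst p \<and> pcat q' p = z then subst_sum Q Z x q q' else 0)"
proof -
  let ?S = "\<lambda>i u. if subst_at Q Z (pcat q p) i u z then x u else 0"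
  have left: "(\<Sum>q'\<in>B. if pt Q q' = fst p \<and> pcat q' p = z then subst_sum Q Z x q q' else 0)
     = (\<Sum>u\<in>P1 Q Z. \<Sum>i<length (snd q). ?S i u)"
  proof -
    have "(\<Sum>q'\<in>B. if pt Q q' = fst p \<and> pcat q' p = z then subst_sum Q Z x q q' else 0)
       = (\<Sum>q'\<in>B. \<Sum>u\<in>P1 Q Z. \<Sum>i<length (snd q).
            if (pt Q q' = fst p \<and> pcat q' p = z) \<and> subst_at Q Z q i u q' then x u else 0)"
      by (intro sum.cong refl) (auto simp: subst_sum_eq intro!: sum.neutral)
    also have "\<dots> = (\<Sum>u\<in>P1 Q Z. \<Sum>i<length (snd q). \<Sum>q'\<in>B.
            if (pt Q q' = fst p \<and> pcat q' p = z) \<and> subst_at Q Z q i u q' then x u else 0)"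
      by (subst sum.swap) (simp only: sum.swap[of _ B])
    also have "\<dots> = (\<Sum>u\<in>P1 Q Z. \<Sum>i<length (snd q). ?S i u)"
      by (intro sum.cong refl sum_subst_at_pcat_left[OF _ q c z]) auto
    finally show ?thesis .
  qed
  have right: "(\<Sum>p'\<in>B. if fst p' = pt Q q \<and> pcat q p' = z then subst_sum Q Z x p p' else 0)
     = (\<Sum>u\<in>P1 Q Z. \<Sum>j<length (snd p). ?S (length (snd q) + j) u)"
  proof -
    have "(\<Sum>p'\<in>B. if fst p' = pt Q q \<and> pcat q p' = z then subst_sum Q Z x p p' else 0)
       = (\<Sum>p'\<in>B. \<Sum>u\<in>P1 Q Z. \<Sum>j<length (snd p).
            if (fst p' = pt Q q \<and> pcat q p' = z) \<and> subst_at Q Z p j u p' then x u else 0)"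
      by (intro sum.cong refl) (auto simp: subst_sum_eq intro!: sum.neutral)
    also have "\<dots> = (\<Sum>u\<in>P1 Q Z. \<Sum>j<length (snd p). \<Sum>p'\<in>B.
            if (fst p' = pt Q q \<and> pcat q p' = z) \<and> subst_at Q Z p j u p' then x u else 0)"
      by (subst sum.swap) (simp only: sum.swap[of _ B])
    also have "\<dots> = (\<Sum>u\<in>P1 Q Z. \<Sum>j<length (snd p). ?S (length (snd q) + j) u)"
      by (intro sum.cong refl sum_subst_at_pcat_right[OF c z]) auto
    finally show ?thesis .
  qed
  have "subst_sum Q Z x (pcat q p) z
      = (\<Sum>u\<in>P1 Q Z. (\<Sum>i<length (snd q). ?S i u) + (\<Sum>j<length (snd p). ?S (length (snd q) + j) u))"
    unfolding subst_sum_eq by (simp add: pcat_def sum_lessThan_add)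
  then show ?thesis
    unfolding left right sum.distrib by simp
qed

lemma subst_sum_pcat_vanish_left:
  assumes q: "walk Q (fst q) (snd q)" and c: "pt Q q = fst p" and z: "z \<in> B"
    and q_rel: "\<And>p'. pcat q p' \<notin> B" and q_der: "\<And>q'. q' \<in> B \<Longrightarrow> subst_sum Q Z x q q' = 0"
  shows "subst_sum Q Z x (pcat q p) z = 0"
proof -
  have "(\<Sum>p'\<in>B. if fst p' = pt Q q \<and> pcat q p' = z then subst_sum Q Z x p p' else 0) = 0"
    using q_rel z by (intro sum.neutral) auto
  moreover have "(\<Sum>q'\<in>B. if pt Q q' = fst p \<and> pcat q' p = z then subst_sum Q Z x q q' else 0) = 0"
    using q_der by (intro sum.neutral) simp
  ultimately show ?thesis
    using subst_sum_pcat[OF q c z, of x] by simp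
qed

lemma subst_sum_pcat_vanish_right:
  assumes q: "walk Q (fst q) (snd q)" and c: "pt Q q = fst p" and z: "z \<in> B"
    and p_rel: "\<And>q'. pt Q q' = fst p \<Longrightarrow> pcat q' p \<notin> B"
    and p_der: "\<And>p'. p' \<in> B \<Longrightarrow> subst_sum Q Z x p p' = 0"
  shows "subst_sum Q Z x (pcat q p) z = 0"
proof -
  have "(\<Sum>p'\<in>B. if fst p' = pt Q q \<and> pcat q p' = z then subst_sum Q Z x p p' else 0) = 0"
    using p_der by (intro sum.neutral) simp
  moreover have "(\<Sum>q'\<in>B. if pt Q q' = fst p \<and> pcat q' p = z then subst_sum Q Z x q q' else 0) = 0"
    using p_rel z by (intro sum.neutral) auto
  ultimately show ?thesis
    using subst_sum_pcat[OF q c z, of x] by simp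
qed

text \<open>This is where \<open>\<psi>\<^sub>1 x = 0\<close> enters: then \<open>\<delta>\<^sub>x\<close> maps \<open>\<langle>Z\<rangle>\<close> into itself.\<close>
lemma subst_sum_notin_Bset_vanish:
  assumes psi: "psi1 Q Z x = vzero" and w: "walk Q (fst w) (snd w)" "w \<notin> B"
  shows "subst_sum Q Z x w z = 0"
proof (cases "z \<in> B")
  case False
  then show ?thesis by (rule subst_sum_notin_Bset)
next
  case z: True
  obtain g xs ys where g: "g \<in> Z" "snd w = xs @ snd g @ ys" "fst g = pt Q (fst w, xs)"
    using w Bset_iff unfolding subpath_def by blast
  define u where "u = (fst w, xs)"
  define v where "v = (pt Q (pcat u g), ys)"
  have "walk Q (fst w) (xs @ snd g)"
    using w(1) g(2) walk_append[of Q "fst w" "xs @ snd g" ys] by simp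
  then have walk_ug: "walk Q (fst (pcat u g)) (snd (pcat u g))" and walk_u: "walk Q (fst u) (snd u)"
    by (simp_all add: u_def pcat_def walk_append)
  have g_der: "subst_sum Q Z x g p = 0" for p
    using psi psi1_eq_subst_sum[OF g(1)] by (metis vzero_def)
  have g_rel: "pcat q g \<notin> B" if "pt Q q = fst g" for q
    using infix_relation_notin_Bset[OF g(1), of "fst q" "snd q" "[]"] that by (simp add: pcat_def)
  have u_g: "pt Q u = fst g"
    by (simp add: u_def g(3))
  have ug_der: "subst_sum Q Z x (pcat u g) q = 0" if "q \<in> B" for q
    by (rule subst_sum_pcat_vanish_right[OF walk_u u_g that g_rel g_der])
  have ug_rel: "pcat (pcat u g) p \<notin> B" for p
    using infix_relation_notin_Bset[OF g(1) g(3)] by (simp add: u_def pcat_def)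
  have "subst_sum Q Z x (pcat (pcat u g) v) z = 0"
    by (rule subst_sum_pcat_vanish_left[OF walk_ug _ z ug_rel ug_der]) (simp add: v_def)
  moreover have "w = pcat (pcat u g) v"
    using g by (simp add: u_def v_def pcat_def prod_eq_iff)
  ultimately show ?thesis
    by simp
qed

end

lemma Lam_iff: "f \<in> Lam Q Z \<longleftrightarrow> (\<forall>u. u \<notin> Bset Q Z \<longrightarrow> f u = 0)"
  by (simp add: Lam_def vecs_def)

lemma vzero_Lam: "vzero \<in> Lam Q Z"
  and vadd_Lam: "x \<in> Lam Q Z \<Longrightarrow> y \<in> Lam Q Z \<Longrightarrow> vadd x y \<in> Lam Q Z"
  and vsub_Lam: "x \<in> Lam Q Z \<Longrightarrow> y \<in> Lam Q Z \<Longrightarrow> vsub x y \<in> Lam Q Z"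
  and vscale_Lam: "x \<in> Lam Q Z \<Longrightarrow> vscale c x \<in> Lam Q Z"
  by (simp_all add: Lam_iff vzero_def vadd_def vsub_def vscale_def)

lemma vzero_apply [simp]: "vzero u = 0"
  by (simp add: vzero_def)

lemma lam_mult_eq: "lam_mult Q Z f g z = (if z \<in> Bset Q Z then
    (\<Sum>p\<in>Bset Q Z. \<Sum>q\<in>Bset Q Z. if pt Q q = fst p \<and> pcat q p = z then f p * g q else 0) else 0)"
  by (simp add: lam_mult_def pcat_def ps_def)

lemma lam_mult_Lam: "lam_mult Q Z f g \<in> Lam Q Z"
  by (simp add: Lam_iff lam_mult_def)

lemma lam_mult_vzero_left: "lam_mult Q Z vzero g = vzero"
  and lam_mult_vzero_right: "lam_mult Q Z f vzero = vzero"
  by (simp_all add: fun_eq_iff lam_mult_eq cong: if_cong)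

lemma lam_mult_eq_sum: "lam_mult Q Z f g z = (\<Sum>p\<in>Bset Q Z. \<Sum>q\<in>Bset Q Z.
    if z \<in> Bset Q Z \<and> pt Q q = fst p \<and> pcat q p = z then f p * g q else 0)"
  by (simp add: lam_mult_eq)

lemma lam_mult_vadd_left: "lam_mult Q Z (vadd f g) h = vadd (lam_mult Q Z f h) (lam_mult Q Z g h)"
  by (rule ext)
    (simp add: lam_mult_eq_sum vadd_def sum.distrib[symmetric] distrib_right if_distrib cong: if_cong)

lemma lam_mult_vadd_right: "lam_mult Q Z f (vadd g h) = vadd (lam_mult Q Z f g) (lam_mult Q Z f h)"
  by (rule ext)
    (simp add: lam_mult_eq_sum vadd_def sum.distrib[symmetric] distrib_left if_distrib cong: if_cong)

lemma lam_mult_vsub_left: "lam_mult Q Z (vsub f g) h = vsub (lam_mult Q Z f h) (lam_mult Q Z g h)"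
  by (rule ext)
    (simp add: lam_mult_eq_sum vsub_def sum_subtractf[symmetric] left_diff_distrib if_distrib
      cong: if_cong)

lemma lam_mult_vsub_right: "lam_mult Q Z f (vsub g h) = vsub (lam_mult Q Z f g) (lam_mult Q Z f h)"
  by (rule ext)
    (simp add: lam_mult_eq_sum vsub_def sum_subtractf[symmetric] right_diff_distrib if_distrib
      cong: if_cong)

lemma lam_mult_vscale_left: "lam_mult Q Z (vscale c f) h = vscale c (lam_mult Q Z f h)"
  by (rule ext) (simp add: lam_mult_eq_sum vscale_def sum_distrib_left mult.assoc if_distrib cong: if_cong)

lemma lam_mult_vscale_right: "lam_mult Q Z f (vscale c h) = vscale c (lam_mult Q Z f h)"
  by (rule ext) (simp add: lam_mult_eq_sum vscale_def sum_distrib_left mult_ac if_distrib cong: if_cong)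

lemma lam_mult_sum_left:
  assumes "finite S"
  shows "lam_mult Q Z (\<lambda>z. \<Sum>i\<in>S. c i * h i z) g = (\<lambda>z. \<Sum>i\<in>S. c i * lam_mult Q Z (h i) g z)"
  using assms
proof (induction S rule: finite_induct)
  case empty
  show ?case
    using lam_mult_vzero_left by (simp add: vzero_def)
next
  case (insert a S)
  then have "(\<lambda>z. \<Sum>i\<in>insert a S. c i * h i z) = vadd (vscale (c a) (h a)) (\<lambda>z. \<Sum>i\<in>S. c i * h i z)"
    by (simp add: fun_eq_iff vadd_def vscale_def)
  with insert show ?case
    by (simp add: lam_mult_vadd_left lam_mult_vscale_left) (simp add: vadd_def vscale_def)
qed

lemma lam_mult_sum_right:
  assumes "finite S"
  shows "lam_mult Q Z f (\<lambda>z. \<Sum>i\<in>S. c i * h i z) = (\<lambda>z. \<Sum>i\<in>S. c i * lam_mult Q Z f (h i) z)"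
  using assms
proof (induction S rule: finite_induct)
  case empty
  show ?case
    using lam_mult_vzero_right by (simp add: vzero_def)
next
  case (insert a S)
  then have "(\<lambda>z. \<Sum>i\<in>insert a S. c i * h i z) = vadd (vscale (c a) (h a)) (\<lambda>z. \<Sum>i\<in>S. c i * h i z)"
    by (simp add: fun_eq_iff vadd_def vscale_def)
  with insert show ?case
    by (simp add: lam_mult_vadd_right lam_mult_vscale_right) (simp add: vadd_def vscale_def)
qed

lemma lam_mult_sum_sum:
  assumes "finite S" "finite T"
  shows "lam_mult Q Z (\<lambda>z. \<Sum>i\<in>S. c i * f i z) (\<lambda>z. \<Sum>j\<in>T. d j * g j z)
    = (\<lambda>z. \<Sum>i\<in>S. \<Sum>j\<in>T. c i * d j * lam_mult Q Z (f i) (g j) z)"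
  by (simp add: lam_mult_sum_left lam_mult_sum_right assms sum_distrib_left mult.assoc)

context monomial_algebra
begin

lemma basis_vec_Lam: "p \<in> B \<Longrightarrow> basis_vec p \<in> Lam Q Z"
  by (auto simp: Lam_iff basis_vec_def)

lemma Lam_basis_expansion:
  assumes f: "f \<in> Lam Q Z"
  shows "f = (\<lambda>z. \<Sum>w\<in>B. f w * basis_vec w z)"
proof
  fix z
  have "(\<Sum>w\<in>B. f w * basis_vec w z) = (\<Sum>w\<in>B. if w = z then f w else 0)"
    by (intro sum.cong) (auto simp: basis_vec_def)
  moreover have "z \<notin> B \<Longrightarrow> f z = 0"
    using f unfolding Lam_def vecs_def by blast
  ultimately show "f z = (\<Sum>w\<in>B. f w * basis_vec w z)"
    using finite_B by auto
qed

lemma lam_mult_basis_right: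
  assumes q: "q \<in> B"
  shows "lam_mult Q Z f (basis_vec q) z =
    (if z \<in> B then (\<Sum>p\<in>B. if pt Q q = fst p \<and> pcat q p = z then f p else 0) else 0)"
proof -
  have "(\<Sum>q'\<in>B. if pt Q q' = fst p \<and> pcat q' p = z then f p * basis_vec q q' else 0)
      = (\<Sum>q'\<in>B. if q' = q \<and> (pt Q q' = fst p \<and> pcat q' p = z) then f p else 0)" for p
    by (intro sum.cong) (auto simp: basis_vec_def)
  also have "\<dots> p = (if pt Q q = fst p \<and> pcat q p = z then f p else 0)" for p
    by (subst sum_if_unique[OF finite_B, of _ q]) (use q in auto)
  finally show ?thesis
    by (simp add: lam_mult_eq)
qed

lemma lam_mult_basis_left:
  assumes "p \<in> B"
  shows "lam_mult Q Z (basis_vec p) g z =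
    (if z \<in> B then (\<Sum>q\<in>B. if pt Q q = fst p \<and> pcat q p = z then g q else 0) else 0)"
proof -
  have "(\<Sum>p'\<in>B. \<Sum>q\<in>B. if pt Q q = fst p' \<and> pcat q p' = z then basis_vec p p' * g q else 0)
      = (\<Sum>p'\<in>B. if p' = p then (\<Sum>q\<in>B. if pt Q q = fst p \<and> pcat q p = z then g q else 0) else 0)"
    by (intro sum.cong refl) (simp add: basis_vec_def cong: if_cong)
  then show ?thesis
    using assms finite_B by (simp add: lam_mult_eq)
qed

lemma lam_mult_basis_basis:
  assumes p: "p \<in> B" and q: "q \<in> B"
  shows "lam_mult Q Z (basis_vec p) (basis_vec q) =
    (if pt Q q = fst p \<and> pcat q p \<in> B then basis_vec (pcat q p) else vzero)"
proof
  fix z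
  have "(\<Sum>p'\<in>B. if pt Q q = fst p' \<and> pcat q p' = z then basis_vec p p' else 0)
      = (\<Sum>p'\<in>B. if p' = p \<and> (pt Q q = fst p' \<and> pcat q p' = z) then 1 else 0)"
    by (intro sum.cong) (auto simp: basis_vec_def)
  also have "\<dots> = (if pt Q q = fst p \<and> pcat q p = z then 1 else 0)"
    by (subst sum_if_unique[OF finite_B, of _ p]) (use p in auto)
  finally have sum_eq: "(\<Sum>p'\<in>B. if pt Q q = fst p' \<and> pcat q p' = z then basis_vec p p' else 0)
      = (if pt Q q = fst p \<and> pcat q p = z then 1 else 0)" .
  have "lam_mult Q Z (basis_vec p) (basis_vec q) z = (if z \<in> B then
      (\<Sum>p'\<in>B. if pt Q q = fst p' \<and> pcat q p' = z then basis_vec p p' else 0) else 0)"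
    by (rule lam_mult_basis_right[OF q])
  then show "lam_mult Q Z (basis_vec p) (basis_vec q) z =
      (if pt Q q = fst p \<and> pcat q p \<in> B then basis_vec (pcat q p) else vzero) z"
    unfolding sum_eq by (auto simp: basis_vec_def)
qed

lemma lam_mult_vertex_right:
  assumes "v \<in> verts Q"
  shows "lam_mult Q Z h (basis_vec (v, [])) z = (if z \<in> B \<and> fst z = v then h z else 0)"
proof -
  have "(\<Sum>p\<in>B. if pt Q (v, []) = fst p \<and> pcat (v, []) p = z then h p else 0)
      = (if z \<in> B \<and> (pt Q (v, []) = fst z \<and> pcat (v, []) z = z) then h z else 0)"
    by (subst sum_if_unique[OF finite_B, of _ z]) (auto simp: pcat_def prod_eq_iff)
  then show ?thesis
    using lam_mult_basis_right[OF vertex_in_Bset[OF assms], of h z] by (auto simp: pcat_def)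
qed

lemma lam_mult_vertex_left:
  assumes "v \<in> verts Q"
  shows "lam_mult Q Z (basis_vec (v, [])) h z = (if z \<in> B \<and> pt Q z = v then h z else 0)"
proof -
  have "(\<Sum>q\<in>B. if pt Q q = fst (v, []) \<and> pcat q (v, []) = z then h q else 0)
      = (if z \<in> B \<and> (pt Q z = fst (v, []) \<and> pcat z (v, []) = z) then h z else 0)"
    by (subst sum_if_unique[OF finite_B, of _ z]) (auto simp: pcat_def prod_eq_iff)
  then show ?thesis
    using lam_mult_basis_left[OF vertex_in_Bset[OF assms], of h z] by (auto simp: pcat_def)
qed

end

definition basis_linear :: "('v, 'a) quiver \<Rightarrow> ('v, 'a) path set \<Rightarrow>
    (('v, 'a, 'k::field) lam \<Rightarrow> ('v, 'a, 'k) lam) \<Rightarrow> bool" where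
  "basis_linear Q Z L \<longleftrightarrow>
    (\<forall>f\<in>Lam Q Z. L f = (\<lambda>z. \<Sum>w\<in>Bset Q Z. f w * L (basis_vec w) z))"

context monomial_algebra
begin

lemma sum_Lam: "(\<And>i. i \<in> S \<Longrightarrow> h i \<in> Lam Q Z) \<Longrightarrow> (\<lambda>z. \<Sum>i\<in>S. c i * h i z) \<in> Lam Q Z"
  by (simp add: Lam_iff)

lemma basis_linear_sum:
  assumes L: "basis_linear Q Z L" and S: "finite S" and h: "\<And>i. i \<in> S \<Longrightarrow> h i \<in> Lam Q Z"
  shows "L (\<lambda>z. \<Sum>i\<in>S. c i * h i z) = (\<lambda>z. \<Sum>i\<in>S. c i * L (h i) z)"
proof -
  have "L (\<lambda>z. \<Sum>i\<in>S. c i * h i z) = (\<lambda>z. \<Sum>w\<in>B. (\<Sum>i\<in>S. c i * h i w) * L (basis_vec w) z)"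
    using L sum_Lam[of S h c] h by (simp add: basis_linear_def)
  also have "\<dots> = (\<lambda>z. \<Sum>i\<in>S. c i * (\<Sum>w\<in>B. h i w * L (basis_vec w) z))"
    by (simp add: sum_distrib_left sum_distrib_right mult.assoc sum.swap[of _ B])
  also have "\<dots> = (\<lambda>z. \<Sum>i\<in>S. c i * L (h i) z)"
    using L h by (simp add: basis_linear_def)
  finally show ?thesis .
qed

lemma lam_mult_basis_expansion:
  assumes "f \<in> Lam Q Z" "g \<in> Lam Q Z"
  shows "lam_mult Q Z f g =
    (\<lambda>z. \<Sum>p\<in>B. f p * (\<Sum>q\<in>B. g q * lam_mult Q Z (basis_vec p) (basis_vec q) z))"
  using lam_mult_sum_sum[OF finite_B finite_B, where c=f and f=basis_vec and d=g and g=basis_vec]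
  by (simp add: sum_distrib_left mult.assoc
      flip: Lam_basis_expansion[OF assms(1)] Lam_basis_expansion[OF assms(2)])

lemma leibniz_of_basis:
  assumes L: "basis_linear Q Z L"
    and basis: "\<And>p q. p \<in> B \<Longrightarrow> q \<in> B \<Longrightarrow> L (lam_mult Q Z (basis_vec p) (basis_vec q)) =
      vadd (lam_mult Q Z (L (basis_vec p)) (basis_vec q)) (lam_mult Q Z (basis_vec p) (L (basis_vec q)))"
    and f: "f \<in> Lam Q Z" and g: "g \<in> Lam Q Z"
  shows "L (lam_mult Q Z f g) = vadd (lam_mult Q Z (L f) g) (lam_mult Q Z f (L g))"
proof -
  have inner_Lam: "(\<lambda>z. \<Sum>q\<in>B. g q * lam_mult Q Z (basis_vec p) (basis_vec q) z) \<in> Lam Q Z" for p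
    by (rule sum_Lam) (rule lam_mult_Lam)
  have "L (lam_mult Q Z f g) =
      (\<lambda>z. \<Sum>p\<in>B. f p * (\<Sum>q\<in>B. g q * L (lam_mult Q Z (basis_vec p) (basis_vec q)) z))"
    unfolding lam_mult_basis_expansion[OF f g]
    by (simp add: basis_linear_sum[OF L finite_B] inner_Lam lam_mult_Lam)
  moreover have "lam_mult Q Z (L f) g =
      (\<lambda>z. \<Sum>p\<in>B. \<Sum>q\<in>B. f p * g q * lam_mult Q Z (L (basis_vec p)) (basis_vec q) z)"
    using lam_mult_sum_sum[OF finite_B finite_B, where c=f and f="\<lambda>p. L (basis_vec p)" and d=g
        and g=basis_vec] L f
    by (simp add: basis_linear_def flip: Lam_basis_expansion[OF g])
  moreover have "lam_mult Q Z f (L g) =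
      (\<lambda>z. \<Sum>p\<in>B. \<Sum>q\<in>B. f p * g q * lam_mult Q Z (basis_vec p) (L (basis_vec q)) z)"
    using lam_mult_sum_sum[OF finite_B finite_B, where c=f and f=basis_vec and d=g
        and g="\<lambda>q. L (basis_vec q)"] L g
    by (simp add: basis_linear_def flip: Lam_basis_expansion[OF f])
  ultimately show ?thesis
    using basis by (simp add: vadd_def fun_eq_iff sum_distrib_left distrib_left sum.distrib mult.assoc)
qed

lemma lam_mult_basis_assoc:
  assumes "p \<in> B" "q \<in> B" "r \<in> B"
  shows "lam_mult Q Z (lam_mult Q Z (basis_vec p) (basis_vec q)) (basis_vec r)
       = lam_mult Q Z (basis_vec p) (lam_mult Q Z (basis_vec q) (basis_vec r))"
proof -
  have "pcat r (pcat q p) \<in> B \<Longrightarrow> pt Q r = fst q \<Longrightarrow> pcat q p \<in> B \<and> pcat r q \<in> B"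
    using Bset_prefix[of "fst r" "snd r @ snd q" "snd p"] pcat_in_Bset_D(2)[of r "pcat q p"]
    by (simp add: pcat_def)
  moreover have "pt Q r = fst q \<Longrightarrow> pt Q (pcat r q) = pt Q q"
    by (rule pt_pcat)
  ultimately show ?thesis
    using assms by (auto simp: lam_mult_basis_basis lam_mult_vzero_left lam_mult_vzero_right pcat_assoc)
qed

lemma lam_mult_assoc:
  assumes f: "f \<in> Lam Q Z" and g: "g \<in> Lam Q Z" and h: "h \<in> Lam Q Z"
  shows "lam_mult Q Z (lam_mult Q Z f g) h = lam_mult Q Z f (lam_mult Q Z g h)"
proof -
  have "lam_mult Q Z (lam_mult Q Z f g) h = (\<lambda>z. \<Sum>p\<in>B. f p * (\<Sum>q\<in>B. g q * (\<Sum>r\<in>B. h r *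
      lam_mult Q Z (lam_mult Q Z (basis_vec p) (basis_vec q)) (basis_vec r) z)))"
    by (subst Lam_basis_expansion[OF h], unfold lam_mult_basis_expansion[OF f g])
      (simp add: lam_mult_sum_left lam_mult_sum_right finite_B)
  moreover have "lam_mult Q Z f (lam_mult Q Z g h) = (\<lambda>z. \<Sum>p\<in>B. f p * (\<Sum>q\<in>B. g q * (\<Sum>r\<in>B. h r *
      lam_mult Q Z (basis_vec p) (lam_mult Q Z (basis_vec q) (basis_vec r)) z)))"
    by (subst Lam_basis_expansion[OF f], unfold lam_mult_basis_expansion[OF g h])
      (simp add: lam_mult_sum_left lam_mult_sum_right finite_B)
  ultimately show ?thesis
    by (simp add: lam_mult_basis_assoc)
qed

end

lemma
  assumes "D \<in> Der Q Z"
  shows Der_Lam: "\<And>x. x \<in> Lam Q Z \<Longrightarrow> D x \<in> Lam Q Z"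
    and Der_outside: "\<And>x. x \<notin> Lam Q Z \<Longrightarrow> D x = vzero"
    and Der_vadd: "\<And>x y. x \<in> Lam Q Z \<Longrightarrow> y \<in> Lam Q Z \<Longrightarrow> D (vadd x y) = vadd (D x) (D y)"
    and Der_vscale: "\<And>c x. x \<in> Lam Q Z \<Longrightarrow> D (vscale c x) = vscale c (D x)"
    and Der_leibniz: "\<And>x y. x \<in> Lam Q Z \<Longrightarrow> y \<in> Lam Q Z \<Longrightarrow>
         D (lam_mult Q Z x y) = vadd (lam_mult Q Z (D x) y) (lam_mult Q Z x (D y))"
  using assms unfolding Der_def by auto

lemma DerI:
  assumes "\<And>x. x \<in> Lam Q Z \<Longrightarrow> D x \<in> Lam Q Z"
    and "\<And>x. x \<notin> Lam Q Z \<Longrightarrow> D x = vzero"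
    and "\<And>x y. x \<in> Lam Q Z \<Longrightarrow> y \<in> Lam Q Z \<Longrightarrow> D (vadd x y) = vadd (D x) (D y)"
    and "\<And>c x. x \<in> Lam Q Z \<Longrightarrow> D (vscale c x) = vscale c (D x)"
    and "\<And>x y. x \<in> Lam Q Z \<Longrightarrow> y \<in> Lam Q Z \<Longrightarrow>
         D (lam_mult Q Z x y) = vadd (lam_mult Q Z (D x) y) (lam_mult Q Z x (D y))"
  shows "D \<in> Der Q Z"
  using assms unfolding Der_def by auto

lemma Der_vzero:
  fixes D :: "('v, 'a, 'k::field) lam \<Rightarrow> ('v, 'a, 'k) lam"
  assumes D: "D \<in> Der Q Z"
  shows "D vzero = vzero"
proof -
  have "vscale 0 vzero = (vzero :: ('v, 'a, 'k::field) lam)"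
    by (simp add: vscale_def vzero_def)
  then have "D vzero = D (vscale 0 vzero)"
    by simp
  also have "\<dots> = vscale 0 (D vzero)"
    by (rule Der_vscale[OF D vzero_Lam])
  also have "\<dots> = vzero"
    by (simp add: vscale_def vzero_def)
  finally show ?thesis .
qed

lemma Der_vsub:
  assumes D: "D \<in> Der Q Z" and x: "x \<in> Lam Q Z" and y: "y \<in> Lam Q Z"
  shows "D (vsub x y) = vsub (D x) (D y)"
proof -
  have "vsub x y = vadd x (vscale (-1) y)"
    by (simp add: vsub_def vadd_def vscale_def fun_eq_iff)
  then have "D (vsub x y) = vadd (D x) (vscale (-1) (D y))"
    by (simp add: Der_vadd[OF D x vscale_Lam[OF y]] Der_vscale[OF D y])
  then show ?thesis
    by (simp add: vsub_def vadd_def vscale_def fun_eq_iff)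
qed

lemma msub_Der:
  assumes D1: "D1 \<in> Der Q Z" and D2: "D2 \<in> Der Q Z"
  shows "msub D1 D2 \<in> Der Q Z"
proof (rule DerI)
  show "msub D1 D2 x \<in> Lam Q Z" if "x \<in> Lam Q Z" for x
    unfolding msub_def using that Der_Lam[OF D1] Der_Lam[OF D2] by (simp add: vsub_Lam)
  show "msub D1 D2 x = vzero" if "x \<notin> Lam Q Z" for x
    unfolding msub_def using that Der_outside[OF D1] Der_outside[OF D2] by (simp add: vsub_def vzero_def)
  show "msub D1 D2 (vadd x y) = vadd (msub D1 D2 x) (msub D1 D2 y)" if "x \<in> Lam Q Z" "y \<in> Lam Q Z" for x y
    unfolding msub_def using that Der_vadd[OF D1] Der_vadd[OF D2]
    by (simp add: vsub_def vadd_def fun_eq_iff)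
  show "msub D1 D2 (vscale c x) = vscale c (msub D1 D2 x)" if "x \<in> Lam Q Z" for c x
    unfolding msub_def using that Der_vscale[OF D1] Der_vscale[OF D2]
    by (simp add: vsub_def vscale_def fun_eq_iff algebra_simps)
  show "msub D1 D2 (lam_mult Q Z x y) =
      vadd (lam_mult Q Z (msub D1 D2 x) y) (lam_mult Q Z x (msub D1 D2 y))"
    if "x \<in> Lam Q Z" "y \<in> Lam Q Z" for x y
    unfolding msub_def
    by (simp only: Der_leibniz[OF D1 that] Der_leibniz[OF D2 that] lam_mult_vsub_left lam_mult_vsub_right)
      (simp add: vsub_def vadd_def fun_eq_iff algebra_simps)
qed

lemma Der_Der_lam_mult:
  assumes D1: "D1 \<in> Der Q Z" and D2: "D2 \<in> Der Q Z" and x: "x \<in> Lam Q Z" and y: "y \<in> Lam Q Z"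
  shows "D1 (D2 (lam_mult Q Z x y)) =
    vadd (vadd (lam_mult Q Z (D1 (D2 x)) y) (lam_mult Q Z (D2 x) (D1 y)))
      (vadd (lam_mult Q Z (D1 x) (D2 y)) (lam_mult Q Z x (D1 (D2 y))))"
  using Der_leibniz[OF D2 x y] Der_vadd[OF D1 lam_mult_Lam lam_mult_Lam] Der_leibniz[OF D1]
    Der_Lam[OF D1] Der_Lam[OF D2] x y
  by simp

lemma mcomm_Der:
  assumes D1: "D1 \<in> Der Q Z" and D2: "D2 \<in> Der Q Z"
  shows "mcomm D1 D2 \<in> Der Q Z"
proof (rule DerI)
  show "mcomm D1 D2 x \<in> Lam Q Z" if "x \<in> Lam Q Z" for x
    unfolding mcomm_def using that Der_Lam[OF D1] Der_Lam[OF D2] by (simp add: vsub_Lam)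
  show "mcomm D1 D2 x = vzero" if "x \<notin> Lam Q Z" for x
    unfolding mcomm_def using that Der_outside[OF D1] Der_outside[OF D2] Der_vzero[OF D1] Der_vzero[OF D2]
    by (simp add: vsub_def vzero_def)
  show "mcomm D1 D2 (vadd x y) = vadd (mcomm D1 D2 x) (mcomm D1 D2 y)"
    if x: "x \<in> Lam Q Z" and y: "y \<in> Lam Q Z" for x y
  proof -
    have "D1 (D2 (vadd x y)) = vadd (D1 (D2 x)) (D1 (D2 y))"
      using Der_vadd[OF D2 x y] Der_vadd[OF D1 Der_Lam[OF D2 x] Der_Lam[OF D2 y]] by simp
    moreover have "D2 (D1 (vadd x y)) = vadd (D2 (D1 x)) (D2 (D1 y))"
      using Der_vadd[OF D1 x y] Der_vadd[OF D2 Der_Lam[OF D1 x] Der_Lam[OF D1 y]] by simp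
    ultimately show ?thesis
      unfolding mcomm_def by (simp add: vsub_def vadd_def fun_eq_iff)
  qed
  show "mcomm D1 D2 (vscale c x) = vscale c (mcomm D1 D2 x)" if x: "x \<in> Lam Q Z" for c x
  proof -
    have "D1 (D2 (vscale c x)) = vscale c (D1 (D2 x))"
      using Der_vscale[OF D2 x] Der_vscale[OF D1 Der_Lam[OF D2 x]] by simp
    moreover have "D2 (D1 (vscale c x)) = vscale c (D2 (D1 x))"
      using Der_vscale[OF D1 x] Der_vscale[OF D2 Der_Lam[OF D1 x]] by simp
    ultimately show ?thesis
      unfolding mcomm_def by (simp add: vsub_def vscale_def fun_eq_iff algebra_simps)
  qed
  show "mcomm D1 D2 (lam_mult Q Z x y) =
      vadd (lam_mult Q Z (mcomm D1 D2 x) y) (lam_mult Q Z x (mcomm D1 D2 y))"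
    if "x \<in> Lam Q Z" "y \<in> Lam Q Z" for x y
    unfolding mcomm_def Der_Der_lam_mult[OF D1 D2 that] Der_Der_lam_mult[OF D2 D1 that]
    by (simp only: lam_mult_vsub_left lam_mult_vsub_right) (simp add: vsub_def vadd_def fun_eq_iff)
qed

definition inner_der :: "('v, 'a) quiver \<Rightarrow> ('v, 'a) path set \<Rightarrow> ('v, 'a, 'k::field) lam \<Rightarrow>
    ('v, 'a, 'k) lam \<Rightarrow> ('v, 'a, 'k) lam" where
  "inner_der Q Z a = (\<lambda>x. if x \<in> Lam Q Z then vsub (lam_mult Q Z a x) (lam_mult Q Z x a) else vzero)"

lemma Ad_iff: "F \<in> Ad Q Z \<longleftrightarrow> (\<exists>a\<in>Lam Q Z. F = inner_der Q Z a)"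
  unfolding Ad_def inner_der_def by blast

lemma inner_der_apply: "x \<in> Lam Q Z \<Longrightarrow> inner_der Q Z a x = vsub (lam_mult Q Z a x) (lam_mult Q Z x a)"
  by (simp add: inner_der_def)

lemma msub_self_Ad: "msub F F \<in> Ad Q Z"
proof -
  have "msub F F = inner_der Q Z vzero"
    by (simp add: inner_der_def lam_mult_vzero_left lam_mult_vzero_right msub_def vsub_def fun_eq_iff)
  then show ?thesis
    using vzero_Lam Ad_iff by blast
qed

context monomial_algebra
begin

lemma Der_basis_linear:
  fixes D :: "('v, 'a, 'k::field) lam \<Rightarrow> ('v, 'a, 'k) lam"
  assumes D: "D \<in> Der Q Z"
  shows "basis_linear Q Z D"
proof -
  have sum_rule: "D (\<lambda>z. \<Sum>w\<in>S. c w * basis_vec w z) = (\<lambda>z. \<Sum>w\<in>S. c w * D (basis_vec w) z)"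
    if "S \<subseteq> B" for S c
    using finite_subset[OF that finite_B] that
  proof (induction S rule: finite_induct)
    case empty
    have "(\<lambda>z. \<Sum>w\<in>{}. c w * basis_vec w z) = vzero"
      by (simp add: vzero_def)
    then show ?case
      using Der_vzero[OF D] by (simp add: vzero_def)
  next
    case (insert a S)
    have a: "basis_vec a \<in> Lam Q Z"
      using insert.prems by (auto intro: basis_vec_Lam)
    have S: "(\<lambda>z. \<Sum>w\<in>S. c w * basis_vec w z) \<in> Lam Q Z"
      using insert basis_vec_Lam by (intro sum_Lam) auto
    have "(\<lambda>z. \<Sum>w\<in>insert a S. c w * basis_vec w z)
        = vadd (vscale (c a) (basis_vec a)) (\<lambda>z. \<Sum>w\<in>S. c w * basis_vec w z)"
      using insert by (simp add: vadd_def vscale_def fun_eq_iff)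
    then show ?case
      using insert Der_vadd[OF D vscale_Lam[OF a] S] Der_vscale[OF D a]
      by (simp add: vadd_def vscale_def fun_eq_iff)
  qed
  show ?thesis
    unfolding basis_linear_def
  proof
    fix f :: "('v, 'a, 'k) lam"
    assume "f \<in> Lam Q Z"
    then show "D f = (\<lambda>z. \<Sum>w\<in>B. f w * D (basis_vec w) z)"
      using sum_rule[of B f] Lam_basis_expansion[of f] by simp
  qed
qed

lemma inner_der_Der:
  assumes a: "a \<in> Lam Q Z"
  shows "inner_der Q Z a \<in> Der Q Z"
proof (rule DerI)
  show "inner_der Q Z a x \<in> Lam Q Z" if "x \<in> Lam Q Z" for x
    using that by (simp add: inner_der_def vsub_Lam lam_mult_Lam)
  show "inner_der Q Z a x = vzero" if "x \<notin> Lam Q Z" for x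
    using that by (simp add: inner_der_def)
  show "inner_der Q Z a (vadd x y) = vadd (inner_der Q Z a x) (inner_der Q Z a y)"
    if "x \<in> Lam Q Z" "y \<in> Lam Q Z" for x y
    by (simp only: inner_der_apply[OF vadd_Lam[OF that]] inner_der_apply[OF that(1)]
        inner_der_apply[OF that(2)] lam_mult_vadd_left lam_mult_vadd_right)
      (simp add: vsub_def vadd_def fun_eq_iff)
  show "inner_der Q Z a (vscale c x) = vscale c (inner_der Q Z a x)" if "x \<in> Lam Q Z" for c x
    by (simp only: inner_der_apply[OF vscale_Lam[OF that]] inner_der_apply[OF that]
        lam_mult_vscale_left lam_mult_vscale_right)
      (simp add: vsub_def vscale_def fun_eq_iff algebra_simps)
  show "inner_der Q Z a (lam_mult Q Z x y) =
      vadd (lam_mult Q Z (inner_der Q Z a x) y) (lam_mult Q Z x (inner_der Q Z a y))"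
    if "x \<in> Lam Q Z" "y \<in> Lam Q Z" for x y
    by (simp only: inner_der_apply[OF lam_mult_Lam] inner_der_apply[OF that(1)]
        inner_der_apply[OF that(2)] lam_mult_vsub_left lam_mult_vsub_right
        lam_mult_assoc[OF a that] lam_mult_assoc[OF that(1) a that(2)] lam_mult_assoc[OF that a])
      (simp add: vsub_def vadd_def fun_eq_iff)
qed

lemma mcomm_inner_der:
  assumes D: "D \<in> Der Q Z" and a: "a \<in> Lam Q Z"
  shows "mcomm D (inner_der Q Z a) = inner_der Q Z (D a)"
proof
  fix f
  show "mcomm D (inner_der Q Z a) f = inner_der Q Z (D a) f"
  proof (cases "f \<in> Lam Q Z")
    case True
    have "D (inner_der Q Z a f) = vsub (D (lam_mult Q Z a f)) (D (lam_mult Q Z f a))"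
      unfolding inner_der_apply[OF True] by (rule Der_vsub[OF D lam_mult_Lam lam_mult_Lam])
    then have "D (inner_der Q Z a f) = vsub (vadd (lam_mult Q Z (D a) f) (lam_mult Q Z a (D f)))
        (vadd (lam_mult Q Z (D f) a) (lam_mult Q Z f (D a)))"
      using Der_leibniz[OF D a True] Der_leibniz[OF D True a] by simp
    then show ?thesis
      unfolding mcomm_def using True Der_Lam[OF D True]
      by (simp add: inner_der_apply vsub_def vadd_def fun_eq_iff)
  next
    case False
    have zero: "inner_der Q Z a vzero = vzero"
      by (simp only: inner_der_apply[OF vzero_Lam] lam_mult_vzero_left lam_mult_vzero_right)
        (simp add: vsub_def fun_eq_iff)
    have outside: "inner_der Q Z a f = vzero" "inner_der Q Z (D a) f = vzero"
      using False by (simp_all add: inner_der_def)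
    show ?thesis
      unfolding mcomm_def outside Der_outside[OF D False] Der_vzero[OF D] zero
      by (simp add: vsub_def fun_eq_iff)
  qed
qed

lemma inner_der_vertex:
  assumes "a \<in> Lam Q Z" "v \<in> verts Q"
  shows "inner_der Q Z a (basis_vec (v, [])) z =
    (if z \<in> B \<and> fst z = v then a z else 0) - (if z \<in> B \<and> pt Q z = v then a z else 0)"
  using assms by (simp add: inner_der_apply basis_vec_Lam vertex_in_Bset vsub_def
      lam_mult_vertex_right lam_mult_vertex_left)

end

section \<open>The derivation \<open>\<Phi>(x)\<close>\<close>

text \<open>\<open>der_of Q Z x\<close> is the map \<open>\<Phi>(x)\<close> of the theorem: the linear extension of \<open>w \<mapsto> \<delta>\<^sub>x(w)\<close>
  from \<open>B\<close> to \<open>\<Lambda>\<close>.\<close>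
definition der_of :: "('v, 'a) quiver \<Rightarrow> ('v, 'a) path set \<Rightarrow> ('v, 'a, 'k::field) pvec \<Rightarrow>
    ('v, 'a, 'k) lam \<Rightarrow> ('v, 'a, 'k) lam" where
  "der_of Q Z x f = (if f \<in> Lam Q Z then (\<lambda>z. \<Sum>w\<in>Bset Q Z. f w * subst_sum Q Z x w z) else vzero)"

lemma der_of_apply: "f \<in> Lam Q Z \<Longrightarrow> der_of Q Z x f z = (\<Sum>w\<in>Bset Q Z. f w * subst_sum Q Z x w z)"
  by (simp add: der_of_def)

lemma der_of_vzero: "der_of Q Z x vzero = vzero"
  by (simp add: der_of_apply vzero_Lam fun_eq_iff)

lemma der_of_Lam: "der_of Q Z x f \<in> Lam Q Z"
  by (auto simp: der_of_def Lam_iff subst_sum_notin_Bset)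

lemma subst_sum_Lam: "subst_sum Q Z x q \<in> Lam Q Z"
  by (simp add: Lam_iff subst_sum_notin_Bset)

lemma der_of_vadd: "der_of Q Z (vadd x y) = madd (der_of Q Z x) (der_of Q Z y)"
  by (simp add: der_of_def madd_def vadd_def fun_eq_iff subst_sum_vadd[unfolded vadd_def]
      sum.distrib distrib_left)

lemma der_of_vscale: "der_of Q Z (vscale c x) = mscale c (der_of Q Z x)"
  by (simp add: der_of_def mscale_def vscale_def fun_eq_iff subst_sum_vscale[unfolded vscale_def]
      sum_distrib_left mult_ac)

context monomial_algebra
begin

lemma der_of_basis_vec:
  assumes q: "q \<in> B"
  shows "der_of Q Z x (basis_vec q) = subst_sum Q Z x q"
proof
  fix z
  have "der_of Q Z x (basis_vec q) z = (\<Sum>w\<in>B. basis_vec q w * subst_sum Q Z x w z)"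
    by (rule der_of_apply[OF basis_vec_Lam[OF q]])
  also have "\<dots> = (\<Sum>w\<in>B. if w = q then subst_sum Q Z x w z else 0)"
    by (intro sum.cong) (auto simp: basis_vec_def)
  finally show "der_of Q Z x (basis_vec q) z = subst_sum Q Z x q z"
    using q finite_B by simp
qed

lemma der_of_basis_linear:
  fixes x :: "('v, 'a, 'k::field) pvec"
  shows "basis_linear Q Z (der_of Q Z x)"
  unfolding basis_linear_def
proof (intro ballI ext)
  fix f :: "('v, 'a, 'k) lam" and z
  assume "f \<in> Lam Q Z"
  then show "der_of Q Z x f z = (\<Sum>w\<in>B. f w * der_of Q Z x (basis_vec w) z)"
    by (simp add: der_of_apply der_of_basis_vec)
qed

lemma der_of_vertex: "v \<in> verts Q \<Longrightarrow> der_of Q Z x (basis_vec (v, [])) = vzero"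
  by (simp add: der_of_basis_vec vertex_in_Bset subst_sum_vertex fun_eq_iff)

lemma lam_mult_subst_sum_pcat:
  assumes p: "p \<in> B" and q: "q \<in> B" and c: "pt Q q = fst p"
  shows "vadd (lam_mult Q Z (subst_sum Q Z x p) (basis_vec q))
      (lam_mult Q Z (basis_vec p) (subst_sum Q Z x q))
       = subst_sum Q Z x (pcat q p)"
proof
  fix z
  show "vadd (lam_mult Q Z (subst_sum Q Z x p) (basis_vec q))
      (lam_mult Q Z (basis_vec p) (subst_sum Q Z x q)) z
      = subst_sum Q Z x (pcat q p) z"
  proof (cases "z \<in> B")
    case True
    then show ?thesis
      using subst_sum_pcat[OF Bset_walk[OF q] c True, of x]
      by (simp add: vadd_def lam_mult_basis_right[OF q] lam_mult_basis_left[OF p] eq_commute)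
  qed (simp add: vadd_def lam_mult_eq subst_sum_notin_Bset)
qed

lemma lam_mult_subst_sum_not_composable:
  assumes p: "p \<in> B" and q: "q \<in> B" and c: "pt Q q \<noteq> fst p"
  shows "lam_mult Q Z (subst_sum Q Z x p) (basis_vec q) = vzero"
    and "lam_mult Q Z (basis_vec p) (subst_sum Q Z x q) = vzero"
proof -
  have "subst_sum Q Z x p p' = 0" if "pt Q q = fst p'" for p'
    using c subst_sum_parallel[OF Bset_walk[OF p], of x p'] that by auto
  then show "lam_mult Q Z (subst_sum Q Z x p) (basis_vec q) = vzero"
    by (auto simp: fun_eq_iff lam_mult_basis_right[OF q] intro!: sum.neutral)
  have "subst_sum Q Z x q q' = 0" if "pt Q q' = fst p" for q'
    using c subst_sum_parallel[OF Bset_walk[OF q], of x q'] that by auto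
  then show "lam_mult Q Z (basis_vec p) (subst_sum Q Z x q) = vzero"
    by (auto simp: fun_eq_iff lam_mult_basis_left[OF p] intro!: sum.neutral)
qed

lemma der_of_leibniz_basis:
  assumes psi: "psi1 Q Z x = vzero" and p: "p \<in> B" and q: "q \<in> B"
  shows "der_of Q Z x (lam_mult Q Z (basis_vec p) (basis_vec q)) =
    vadd (lam_mult Q Z (der_of Q Z x (basis_vec p)) (basis_vec q))
      (lam_mult Q Z (basis_vec p) (der_of Q Z x (basis_vec q)))"
proof (cases "pt Q q = fst p")
  case c: True
  have "subst_sum Q Z x (pcat q p) = vzero" if "pcat q p \<notin> B"
    using subst_sum_notin_Bset_vanish[OF psi walk_pcat[OF Bset_walk[OF q] Bset_walk[OF p] c] that]
    by (simp add: fun_eq_iff)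
  then have "der_of Q Z x (lam_mult Q Z (basis_vec p) (basis_vec q)) = subst_sum Q Z x (pcat q p)"
    by (auto simp: lam_mult_basis_basis p q c der_of_basis_vec der_of_vzero)
  then show ?thesis
    using lam_mult_subst_sum_pcat[OF p q c, of x] by (simp add: der_of_basis_vec p q)
next
  case False
  then show ?thesis
    using lam_mult_subst_sum_not_composable[OF p q False, of x]
    by (simp add: lam_mult_basis_basis p q der_of_basis_vec der_of_vzero fun_eq_iff vadd_def)
qed

lemma der_of_Der:
  assumes psi: "psi1 Q Z x = vzero"
  shows "der_of Q Z x \<in> Der Q Z"
proof (rule DerI)
  show "der_of Q Z x (vadd f g) = vadd (der_of Q Z x f) (der_of Q Z x g)"
    if "f \<in> Lam Q Z" "g \<in> Lam Q Z" for f g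
    using that vadd_Lam[OF that] by (simp add: der_of_apply vadd_def fun_eq_iff sum.distrib distrib_right)
  show "der_of Q Z x (vscale c f) = vscale c (der_of Q Z x f)" if "f \<in> Lam Q Z" for c f
    using that vscale_Lam[OF that]
    by (simp add: der_of_apply vscale_def fun_eq_iff sum_distrib_left mult.assoc)
  show "der_of Q Z x (lam_mult Q Z f g) =
      vadd (lam_mult Q Z (der_of Q Z x f) g) (lam_mult Q Z f (der_of Q Z x g))"
    if "f \<in> Lam Q Z" "g \<in> Lam Q Z" for f g
    using leibniz_of_basis[OF der_of_basis_linear der_of_leibniz_basis[OF psi] that] .
qed (simp add: der_of_Lam, simp add: der_of_def)

lemma Ker1_der_of_Der: "x \<in> Ker1 Q Z \<Longrightarrow> der_of Q Z x \<in> Der Q Z"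
  by (rule der_of_Der) (simp add: Ker1_def)

end

section \<open>Derivations vanishing on the vertices\<close>

definition arrow_part :: "('v, 'a) quiver \<Rightarrow> ('v, 'a) path set \<Rightarrow>
    (('v, 'a, 'k::field) lam \<Rightarrow> ('v, 'a, 'k) lam) \<Rightarrow> ('v, 'a, 'k) pvec" where
  "arrow_part Q Z D = (\<lambda>(q, z). if (q, z) \<in> P1 Q Z then D (basis_vec q) z else 0)"

lemma arrow_part_apply: "arrow_part Q Z D (q, z) = (if (q, z) \<in> P1 Q Z then D (basis_vec q) z else 0)"
  by (simp add: arrow_part_def)

context monomial_algebra
begin

lemma Der_arrow_parallel:
  assumes D: "D \<in> Der Q Z" and vertices: "\<And>v. v \<in> verts Q \<Longrightarrow> D (basis_vec (v, [])) = vzero"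
    and a: "a \<in> arrs Q" and nz: "D (basis_vec (apath Q a)) z \<noteq> 0"
  shows "(apath Q a, z) \<in> P1 Q Z"
proof -
  let ?s = "basis_vec (src Q a, [])" and ?t = "basis_vec (tgt Q a, [])" and ?a = "basis_vec (apath Q a)"
  have s: "src Q a \<in> verts Q" and t: "tgt Q a \<in> verts Q"
    using src_vert[OF a] tgt_vert[OF a] by auto
  have aB: "apath Q a \<in> B"
    by (rule arrow_in_Bset[OF a])
  then have aL: "?a \<in> Lam Q Z"
    by (rule basis_vec_Lam)
  have ta: "lam_mult Q Z ?t ?a = ?a" and as: "lam_mult Q Z ?a ?s = ?a"
    using lam_mult_basis_basis[OF vertex_in_Bset[OF t] aB]
      lam_mult_basis_basis[OF aB vertex_in_Bset[OF s]] aB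
    by (simp_all add: pcat_def apath_def)
  have "D ?a = vadd (lam_mult Q Z (D ?t) ?a) (lam_mult Q Z ?t (D ?a))"
    using Der_leibniz[OF D basis_vec_Lam[OF vertex_in_Bset[OF t]] aL] by (simp only: ta)
  moreover have "vadd (lam_mult Q Z (D ?t) ?a) (lam_mult Q Z ?t (D ?a)) z
      = (if z \<in> B \<and> pt Q z = tgt Q a then D ?a z else 0)"
    by (simp add: vertices t vadd_def lam_mult_vzero_left lam_mult_vertex_left[OF t])
  ultimately have tgt: "D ?a z = (if z \<in> B \<and> pt Q z = tgt Q a then D ?a z else 0)"
    by simp
  have "D ?a = vadd (lam_mult Q Z (D ?a) ?s) (lam_mult Q Z ?a (D ?s))"
    using Der_leibniz[OF D aL basis_vec_Lam[OF vertex_in_Bset[OF s]]] by (simp only: as)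
  moreover have "vadd (lam_mult Q Z (D ?a) ?s) (lam_mult Q Z ?a (D ?s)) z
      = (if z \<in> B \<and> fst z = src Q a then D ?a z else 0)"
    by (simp add: vertices s vadd_def lam_mult_vzero_right lam_mult_vertex_right[OF s])
  ultimately have src: "D ?a z = (if z \<in> B \<and> fst z = src Q a then D ?a z else 0)"
    by simp
  from nz tgt src have "z \<in> B" "pt Q z = tgt Q a" "fst z = src Q a"
    by (metis (full_types))+
  then show ?thesis
    using P1_iff[of "(apath Q a, z)"] a by auto
qed

lemma Der_arrow_eq_subst_sum:
  assumes D: "D \<in> Der Q Z" and vertices: "\<And>v. v \<in> verts Q \<Longrightarrow> D (basis_vec (v, [])) = vzero"
    and a: "a \<in> arrs Q"
  shows "D (basis_vec (apath Q a)) = subst_sum Q Z (arrow_part Q Z D) (apath Q a)"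
proof
  fix z
  show "D (basis_vec (apath Q a)) z = subst_sum Q Z (arrow_part Q Z D) (apath Q a) z"
    using Der_arrow_parallel[OF D vertices a, of z]
    by (cases "(apath Q a, z) \<in> P1 Q Z") (auto simp: subst_sum_arrow[OF a] arrow_part_apply)
qed

lemma Der_basis_vec_eq_subst_sum:
  assumes D: "D \<in> Der Q Z" and vertices: "\<And>v. v \<in> verts Q \<Longrightarrow> D (basis_vec (v, [])) = vzero"
  shows "w \<in> B \<Longrightarrow> D (basis_vec w) = subst_sum Q Z (arrow_part Q Z D) w"
proof (induction "length (snd w)" arbitrary: w)
  case 0
  then obtain v where w: "w = (v, [])"
    by (cases w) auto
  then have "v \<in> verts Q"
    using walk_start[OF Bset_walk[OF "0.prems"]] by simp
  then show ?case
    using vertices w by (simp add: subst_sum_vertex fun_eq_iff)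
next
  case (Suc n)
  then obtain a as where w: "snd w = a # as"
    by (cases "snd w") auto
  then have a: "a \<in> arrs Q" "src Q a = fst w"
    using Bset_walk[OF Suc.prems] by auto
  define q where "q = apath Q a"
  define p where "p = (tgt Q a, as)"
  have wqp: "w = pcat q p" and c: "pt Q q = fst p"
    using w a by (simp_all add: q_def p_def pcat_def apath_def prod_eq_iff)
  have "pcat q p \<in> B"
    using Suc.prems wqp by simp
  then have q: "q \<in> B" and p: "p \<in> B"
    using pcat_in_Bset_D c by blast+
  have IH: "D (basis_vec p) = subst_sum Q Z (arrow_part Q Z D) p"
    using Suc.hyps p w by (simp add: p_def)
  have arrow: "D (basis_vec q) = subst_sum Q Z (arrow_part Q Z D) q"
    unfolding q_def by (rule Der_arrow_eq_subst_sum[OF D vertices a(1)])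
  have "D (basis_vec w) = D (lam_mult Q Z (basis_vec p) (basis_vec q))"
    unfolding wqp using c \<open>pcat q p \<in> B\<close> by (simp add: lam_mult_basis_basis[OF p q])
  also have "\<dots> = vadd (lam_mult Q Z (D (basis_vec p)) (basis_vec q))
      (lam_mult Q Z (basis_vec p) (D (basis_vec q)))"
    by (rule Der_leibniz[OF D basis_vec_Lam[OF p] basis_vec_Lam[OF q]])
  also have "\<dots> = subst_sum Q Z (arrow_part Q Z D) w"
    unfolding IH arrow wqp by (rule lam_mult_subst_sum_pcat[OF p q c])
  finally show ?case .
qed

lemma relation_split:
  assumes g: "g \<in> Z"
  obtains a as where "a \<in> arrs Q" "g = pcat (apath Q a) (tgt Q a, as)" "(tgt Q a, as) \<in> B" "g \<notin> B"
proof -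
  obtain a as where as: "snd g = a # as"
    using relation_length[OF g] by (cases "snd g") auto
  then have a: "a \<in> arrs Q" "src Q a = fst g" "walk Q (tgt Q a) as"
    using relation_walk[OF g] by auto
  have "\<not> subpath Q g' (tgt Q a, as)" if g': "g' \<in> Z" for g'
  proof
    assume sub: "subpath Q g' (tgt Q a, as)"
    moreover have "g = (fst g, [a] @ as)"
      using as by (simp add: prod_eq_iff)
    ultimately have "subpath Q g' g"
      using subpath_append_left[of Q g' "fst g" "[a]" as] a(2) by simp
    then have "g' = g"
      using relations g' g unfolding monomial_relations_def by blast
    with sub as show False
      unfolding subpath_def by auto
  qed
  then have "(tgt Q a, as) \<in> B"
    using Bset_iff a(3) by auto
  moreover have "g \<notin> B"
    using subpath_infix[of g Q "fst g" "[]" "[]"] Bset_iff g by auto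
  ultimately show ?thesis
    using that a as by (simp add: pcat_def apath_def prod_eq_iff)
qed

lemma arrow_part_Ker1:
  assumes D: "D \<in> Der Q Z" and vertices: "\<And>v. v \<in> verts Q \<Longrightarrow> D (basis_vec (v, [])) = vzero"
  shows "arrow_part Q Z D \<in> Ker1 Q Z"
proof -
  have "psi1 Q Z (arrow_part Q Z D) (g, z) = 0" for g z
  proof (cases "g \<in> Z \<and> z \<in> B")
    case True
    then obtain a as where a: "a \<in> arrs Q" "g = pcat (apath Q a) (tgt Q a, as)"
        "(tgt Q a, as) \<in> B" "g \<notin> B"
      using relation_split by blast
    define q where "q = apath Q a"
    define p where "p = (tgt Q a, as)"
    have q: "q \<in> B" and p: "p \<in> B" and c: "pt Q q = fst p" and g: "g = pcat q p"
      using a arrow_in_Bset by (simp_all add: q_def p_def apath_def)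
    have "subst_sum Q Z (arrow_part Q Z D) g =
        vadd (lam_mult Q Z (D (basis_vec p)) (basis_vec q)) (lam_mult Q Z (basis_vec p) (D (basis_vec q)))"
      using lam_mult_subst_sum_pcat[OF p q c, of "arrow_part Q Z D"]
      by (simp add: g Der_basis_vec_eq_subst_sum[OF D vertices p]
          Der_basis_vec_eq_subst_sum[OF D vertices q])
    also have "\<dots> = D (lam_mult Q Z (basis_vec p) (basis_vec q))"
      by (rule Der_leibniz[OF D basis_vec_Lam[OF p] basis_vec_Lam[OF q], symmetric])
    also have "\<dots> = vzero"
      using c g a(4) Der_vzero[OF D] by (simp add: lam_mult_basis_basis[OF p q])
    finally show ?thesis
      using True by (simp add: psi1_eq_subst_sum)
  next
    case False
    then show ?thesis
      by (cases "g \<in> Z") (simp add: psi1_eq_subst_sum subst_sum_notin_Bset, simp add: psi1_def)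
  qed
  then show ?thesis
    by (auto simp: Ker1_def vecs_def arrow_part_def fun_eq_iff)
qed

lemma der_of_arrow_part:
  assumes D: "D \<in> Der Q Z" and vertices: "\<And>v. v \<in> verts Q \<Longrightarrow> D (basis_vec (v, [])) = vzero"
  shows "der_of Q Z (arrow_part Q Z D) = D"
proof
  fix f
  show "der_of Q Z (arrow_part Q Z D) f = D f"
  proof (cases "f \<in> Lam Q Z")
    case True
    then show ?thesis
      using Der_basis_linear[OF D] der_of_basis_linear[of "arrow_part Q Z D"]
      by (simp add: basis_linear_def der_of_basis_vec Der_basis_vec_eq_subst_sum[OF D vertices])
  next
    case False
    then show ?thesis
      using Der_outside[OF D False] by (simp add: der_of_def)
  qed
qed

lemma arrow_part_der_of:
  assumes x: "x \<in> vecs (P1 Q Z)"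
  shows "arrow_part Q Z (der_of Q Z x) = x"
proof
  fix u :: "('v, 'a) path \<times> ('v, 'a) path"
  show "arrow_part Q Z (der_of Q Z x) u = x u"
  proof (cases "u \<in> P1 Q Z")
    case True
    then obtain a where a: "a \<in> arrs Q" "fst u = apath Q a"
      using P1_iff by blast
    then show ?thesis
      using True by (cases u) (simp add: arrow_part_apply der_of_basis_vec arrow_in_Bset subst_sum_arrow)
  next
    case False
    moreover have "x u = 0"
      using x False unfolding vecs_def by blast
    ultimately show ?thesis
      by (cases u) (simp add: arrow_part_apply)
  qed
qed

end

section \<open>Inner derivations and the image of \<open>\<psi>\<^sub>0\<close>\<close>

definition vertex_part :: "('v, 'a) quiver \<Rightarrow> ('v, 'a) path set \<Rightarrow>
    (('v, 'a, 'k::field) lam \<Rightarrow> ('v, 'a, 'k) lam) \<Rightarrow> ('v, 'a, 'k) lam" where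
  "vertex_part Q Z D = (\<lambda>z. if z \<in> Bset Q Z then D (basis_vec (fst z, [])) z else 0)"

context monomial_algebra
begin

lemma Der_vertex_idempotent:
  assumes D: "D \<in> Der Q Z" and w: "w \<in> verts Q" and z: "z \<in> B"
  shows "D (basis_vec (w, [])) z =
    (if fst z = w then D (basis_vec (w, [])) z else 0) +
    (if pt Q z = w then D (basis_vec (w, [])) z else 0)"
proof -
  let ?e = "basis_vec (w, [])"
  have eL: "?e \<in> Lam Q Z"
    by (rule basis_vec_Lam[OF vertex_in_Bset[OF w]])
  have idem: "lam_mult Q Z ?e ?e = ?e"
    using lam_mult_basis_basis[OF vertex_in_Bset[OF w] vertex_in_Bset[OF w]] vertex_in_Bset[OF w]
    by (simp add: pcat_def)
  have "D ?e = vadd (lam_mult Q Z (D ?e) ?e) (lam_mult Q Z ?e (D ?e))"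
    using Der_leibniz[OF D eL eL] by (simp only: idem)
  then have "D ?e z = vadd (lam_mult Q Z (D ?e) ?e) (lam_mult Q Z ?e (D ?e)) z"
    by (rule fun_cong)
  then show ?thesis
    using z by (simp add: vadd_def lam_mult_vertex_right[OF w] lam_mult_vertex_left[OF w])
qed

lemma Der_vertex_orthogonal:
  assumes D: "D \<in> Der Q Z" and v: "v \<in> verts Q" and w: "w \<in> verts Q" "v \<noteq> w" and z: "z \<in> B"
  shows "(if fst z = v then D (basis_vec (w, [])) z else 0) +
    (if pt Q z = w then D (basis_vec (v, [])) z else 0) = 0"
proof -
  have orth: "lam_mult Q Z (basis_vec (w, [])) (basis_vec (v, [])) = vzero"
    using lam_mult_basis_basis[OF vertex_in_Bset[OF w(1)] vertex_in_Bset[OF v]] w(2) by simp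
  have "vzero = vadd (lam_mult Q Z (D (basis_vec (w, []))) (basis_vec (v, [])))
      (lam_mult Q Z (basis_vec (w, [])) (D (basis_vec (v, []))))"
    using Der_leibniz[OF D basis_vec_Lam[OF vertex_in_Bset[OF w(1)]] basis_vec_Lam[OF vertex_in_Bset[OF v]]]
    by (simp only: orth Der_vzero[OF D])
  then have "0 = vadd (lam_mult Q Z (D (basis_vec (w, []))) (basis_vec (v, [])))
      (lam_mult Q Z (basis_vec (w, [])) (D (basis_vec (v, [])))) z"
    by (metis vzero_apply)
  then show ?thesis
    using z by (simp add: vadd_def lam_mult_vertex_right[OF v] lam_mult_vertex_left[OF w(1)])
qed

lemma Der_vertex_apply:
  assumes D: "D \<in> Der Q Z" and w: "w \<in> verts Q" and z: "z \<in> B"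
  shows "D (basis_vec (w, [])) z =
    (if fst z = w then vertex_part Q Z D z else 0) - (if pt Q z = w then vertex_part Q Z D z else 0)"
proof -
  note idem = Der_vertex_idempotent[OF D w z]
  have vertex_part_z: "vertex_part Q Z D z = D (basis_vec (fst z, [])) z"
    using z by (simp add: vertex_part_def)
  have fz: "fst z \<in> verts Q"
    using walk_start[OF Bset_walk[OF z]] .
  consider "fst z = w" "pt Q z = w" | "fst z = w" "pt Q z \<noteq> w" | "fst z \<noteq> w" "pt Q z = w"
    | "fst z \<noteq> w" "pt Q z \<noteq> w"
    by blast
  then show ?thesis
  proof cases
    case 1
    then have "D (basis_vec (w, [])) z = D (basis_vec (w, [])) z + D (basis_vec (w, [])) z"
      using idem by simp
    then have "D (basis_vec (w, [])) z = 0"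
      by (metis add_cancel_left_right)
    with 1 show ?thesis
      by simp
  next
    case 2
    then show ?thesis
      by (simp add: vertex_part_z)
  next
    case 3
    then have "D (basis_vec (w, [])) z = - D (basis_vec (fst z, [])) z"
      using Der_vertex_orthogonal[OF D fz w _ z] by (simp add: eq_neg_iff_add_eq_0)
    with 3 show ?thesis
      by (simp add: vertex_part_z)
  next
    case 4
    then have "D (basis_vec (w, [])) z = 0"
      using idem by (simp only: if_False add_0_right)
    with 4 show ?thesis
      by simp
  qed
qed

lemma inner_der_vertex_part:
  assumes D: "D \<in> Der Q Z" and w: "w \<in> verts Q"
  shows "inner_der Q Z (vertex_part Q Z D) (basis_vec (w, [])) = D (basis_vec (w, []))"
proof
  fix z
  have "vertex_part Q Z D \<in> Lam Q Z"
    by (simp add: vertex_part_def Lam_iff)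
  then have lhs: "inner_der Q Z (vertex_part Q Z D) (basis_vec (w, [])) z =
      (if z \<in> B \<and> fst z = w then vertex_part Q Z D z else 0)
    - (if z \<in> B \<and> pt Q z = w then vertex_part Q Z D z else 0)"
    by (rule inner_der_vertex[OF _ w])
  show "inner_der Q Z (vertex_part Q Z D) (basis_vec (w, [])) z = D (basis_vec (w, [])) z"
  proof (cases "z \<in> B")
    case True
    then show ?thesis
      using lhs Der_vertex_apply[OF D w True] True by simp
  next
    case False
    then have "D (basis_vec (w, [])) z = 0"
      using Der_Lam[OF D basis_vec_Lam[OF vertex_in_Bset[OF w]]] unfolding Lam_def vecs_def by blast
    then show ?thesis
      using lhs False by simp
  qed
qed

lemma der_of_surj_mod_Ad:
  assumes D: "D \<in> Der Q Z"
  shows "\<exists>x\<in>Ker1 Q Z. msub (der_of Q Z x) D \<in> Ad Q Z"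
proof -
  let ?a = "vertex_part Q Z D"
  have aL: "?a \<in> Lam Q Z"
    by (simp add: vertex_part_def Lam_iff)
  let ?D' = "msub D (inner_der Q Z ?a)"
  have D': "?D' \<in> Der Q Z"
    by (rule msub_Der[OF D inner_der_Der[OF aL]])
  have vertices: "?D' (basis_vec (v, [])) = vzero" if "v \<in> verts Q" for v
    using inner_der_vertex_part[OF D that] by (simp add: msub_def vsub_def fun_eq_iff)
  let ?x = "arrow_part Q Z ?D'"
  have x: "der_of Q Z ?x = ?D'"
    by (rule der_of_arrow_part[OF D' vertices])
  have "msub (der_of Q Z ?x) D = inner_der Q Z (vscale (-1) ?a)"
  proof
    fix f
    show "msub (der_of Q Z ?x) D f = inner_der Q Z (vscale (-1) ?a) f"
    proof (cases "f \<in> Lam Q Z")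
      case True
      then show ?thesis
        unfolding x unfolding msub_def inner_der_apply[OF True]
          lam_mult_vscale_left lam_mult_vscale_right
        by (simp add: vsub_def vscale_def fun_eq_iff)
    next
      case False
      then have "inner_der Q Z ?a f = vzero" "inner_der Q Z (vscale (-1) ?a) f = vzero"
        by (simp_all add: inner_der_def)
      then show ?thesis
        unfolding x unfolding msub_def Der_outside[OF D False]
        by (simp add: vsub_def fun_eq_iff)
    qed
  qed
  then show ?thesis
    using arrow_part_Ker1[OF D' vertices] vscale_Lam[OF aL] Ad_iff by blast
qed

end

definition cycle_coeffs :: "('v, 'a) quiver \<Rightarrow> ('v, 'a) path set \<Rightarrow> ('v, 'a, 'k::field) lam \<Rightarrow>
    ('v, 'a, 'k) pvec" where
  "cycle_coeffs Q Z a = (\<lambda>u. if u \<in> P0 Q Z then - a (snd u) else 0)"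

context monomial_algebra
begin

lemma inner_der_vertex_zero:
  assumes a: "a \<in> Lam Q Z" and cyclic: "\<And>z. a z \<noteq> 0 \<Longrightarrow> fst z = pt Q z" and v: "v \<in> verts Q"
  shows "inner_der Q Z a (basis_vec (v, [])) = vzero"
proof
  fix z
  show "inner_der Q Z a (basis_vec (v, [])) z = vzero z"
    using inner_der_vertex[OF a v, of z] cyclic[of z] by (cases "a z = 0") auto
qed

lemma cyclic_of_inner_der_vertex_zero:
  assumes a: "a \<in> Lam Q Z" and vertices: "\<And>v. v \<in> verts Q \<Longrightarrow> inner_der Q Z a (basis_vec (v, [])) = vzero"
    and az: "a z \<noteq> 0"
  shows "fst z = pt Q z"
proof -
  have z: "z \<in> B"
    using a az unfolding Lam_def vecs_def by blast
  then have v: "fst z \<in> verts Q"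
    using walk_start[OF Bset_walk] by blast
  have "inner_der Q Z a (basis_vec (fst z, [])) z = 0"
    using vertices[OF v] by simp
  then have "a z - (if pt Q z = fst z then a z else 0) = 0"
    using inner_der_vertex[OF a v, of z] z by simp
  then show ?thesis
    using az by (cases "pt Q z = fst z") auto
qed

lemma sum_P0_eq: "(\<Sum>u\<in>P0 Q Z. F u) = (\<Sum>c\<in>B. if fst c = pt Q c then F ((fst c, []), c) else 0)"
proof -
  have P0: "P0 Q Z = (\<lambda>c. ((fst c, []), c)) ` {c \<in> B. fst c = pt Q c}"
    using P0_iff by (auto simp: image_iff prod_eq_iff)
  have "inj_on (\<lambda>c. ((fst c, []), c)) {c \<in> B. fst c = pt Q c}"
    by (rule inj_onI) simp
  then have "(\<Sum>u\<in>P0 Q Z. F u) = (\<Sum>c\<in>{c \<in> B. fst c = pt Q c}. F ((fst c, []), c))"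
    unfolding P0 by (rule sum.reindex[unfolded comp_def])
  also have "\<dots> = (\<Sum>c\<in>B. if fst c = pt Q c then F ((fst c, []), c) else 0)"
    by (rule sum.inter_filter[OF finite_B])
  finally show ?thesis .
qed

lemma psi0_b_nonzero_P1:
  assumes u: "u \<in> P0 Q Z" and nz: "psi0_b Q Z u (q, z) \<noteq> (0::'k::field)"
  shows "(q, z) \<in> P1 Q Z"
proof -
  let ?c = "snd u"
  have c: "?c \<in> B" "fst ?c = pt Q ?c" "fst u = (fst ?c, [])"
    using u P0_iff by auto
  from nz consider
      a where "a \<in> arrs Q" "q = apath Q a" "src Q a = fst ?c" "z = (fst ?c, snd ?c @ [a])" "z \<in> B"
    | a where "a \<in> arrs Q" "q = apath Q a" "tgt Q a = fst ?c" "z = (src Q a, a # snd ?c)" "z \<in> B"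
    using c(3) by (auto simp: psi0_b_def split: if_splits)
  then show ?thesis
  proof cases
    case 1
    then have "pt Q z = tgt Q a"
      by (simp add: pt_append)
    with 1 show ?thesis
      using P1_iff[of "(q, z)"] by auto
  next
    case 2
    then have "pt Q z = pt Q ?c"
      by (metis pt_Cons prod.collapse)
    with 2 c(2) show ?thesis
      using P1_iff[of "(q, z)"] by auto
  qed
qed

lemma psi0_cycle_coeffs_arrow:
  fixes a :: "('v, 'a, 'k::field) lam"
  assumes cyclic: "\<And>z. a z \<noteq> 0 \<Longrightarrow> fst z = pt Q z" and b: "b \<in> arrs Q" and z: "z \<in> B"
  shows "psi0 Q Z (cycle_coeffs Q Z a) (apath Q b, z) =
      (\<Sum>c\<in>B. if tgt Q b = fst c \<and> z = (src Q b, b # snd c) then a c else 0)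
    - (\<Sum>c\<in>B. if src Q b = fst c \<and> z = (fst c, snd c @ [b]) then a c else 0)"
proof -
  have "psi0 Q Z (cycle_coeffs Q Z a) (apath Q b, z) = (\<Sum>c\<in>B. if fst c = pt Q c then
      cycle_coeffs Q Z a ((fst c, []), c) * psi0_b Q Z ((fst c, []), c) (apath Q b, z) else 0)"
    unfolding psi0_def by (rule sum_P0_eq)
  also have "\<dots> = (\<Sum>c\<in>B. (if tgt Q b = fst c \<and> z = (src Q b, b # snd c) then a c else 0)
      - (if src Q b = fst c \<and> z = (fst c, snd c @ [b]) then a c else 0))"
  proof (intro sum.cong refl)
    fix c
    assume c: "c \<in> B"
    show "(if fst c = pt Q c
        then cycle_coeffs Q Z a ((fst c, []), c) * psi0_b Q Z ((fst c, []), c) (apath Q b, z)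
        else 0) = (if tgt Q b = fst c \<and> z = (src Q b, b # snd c) then a c else 0)
      - (if src Q b = fst c \<and> z = (fst c, snd c @ [b]) then a c else 0)"
    proof (cases "a c = 0")
      case False
      then have "fst c = pt Q c" "((fst c, []), c) \<in> P0 Q Z"
        using cyclic P0_iff c by auto
      then show ?thesis
        using b z by (simp add: cycle_coeffs_def psi0_b_def apath_def algebra_simps)
    qed (simp add: cycle_coeffs_def)
  qed
  finally show ?thesis
    by (simp add: sum_subtractf)
qed

lemma arrow_part_inner_der:
  fixes a :: "('v, 'a, 'k::field) lam"
  assumes a: "a \<in> Lam Q Z" and cyclic: "\<And>z. a z \<noteq> 0 \<Longrightarrow> fst z = pt Q z"
  shows "arrow_part Q Z (inner_der Q Z a) = psi0 Q Z (cycle_coeffs Q Z a)"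
proof
  fix u :: "('v, 'a) path \<times> ('v, 'a) path"
  obtain q z where u: "u = (q, z)"
    by (cases u)
  show "arrow_part Q Z (inner_der Q Z a) u = psi0 Q Z (cycle_coeffs Q Z a) u"
  proof (cases "(q, z) \<in> P1 Q Z")
    case True
    then obtain b where b: "b \<in> arrs Q" "q = apath Q b" and z: "z \<in> B"
      using P1_iff[of "(q, z)"] by auto
    have q: "q \<in> B"
      using arrow_in_Bset[OF b(1)] b(2) by simp
    have "lam_mult Q Z a (basis_vec q) z =
        (\<Sum>c\<in>B. if tgt Q b = fst c \<and> z = (src Q b, b # snd c) then a c else 0)"
      unfolding lam_mult_basis_right[OF q] using z
      by (auto simp: b(2) apath_def pcat_def intro!: sum.cong)
    moreover have "lam_mult Q Z (basis_vec q) a z =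
        (\<Sum>c\<in>B. if src Q b = fst c \<and> z = (fst c, snd c @ [b]) then a c else 0)"
      unfolding lam_mult_basis_left[OF q] using z cyclic
      by (fastforce simp: b(2) apath_def pcat_def intro!: sum.cong)
    moreover have "psi0 Q Z (cycle_coeffs Q Z a) (q, z) =
        (\<Sum>c\<in>B. if tgt Q b = fst c \<and> z = (src Q b, b # snd c) then a c else 0)
      - (\<Sum>c\<in>B. if src Q b = fst c \<and> z = (fst c, snd c @ [b]) then a c else 0)"
      unfolding b(2) by (rule psi0_cycle_coeffs_arrow[OF cyclic b(1) z])
    moreover have "arrow_part Q Z (inner_der Q Z a) u =
        lam_mult Q Z a (basis_vec q) z - lam_mult Q Z (basis_vec q) a z"
      using True u by (simp add: arrow_part_apply inner_der_apply[OF basis_vec_Lam[OF q]] vsub_def)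
    ultimately show ?thesis
      using u by simp
  next
    case False
    have "psi0_b Q Z u' (q, z) = (0::'k)" if "u' \<in> P0 Q Z" for u'
      using False psi0_b_nonzero_P1[OF that] by blast
    then have "psi0 Q Z (cycle_coeffs Q Z a) (q, z) = 0"
      unfolding psi0_def by (simp add: sum.neutral)
    then show ?thesis
      using u False by (simp add: arrow_part_apply)
  qed
qed

lemma cycle_coeffs_surj:
  fixes y :: "('v, 'a, 'k::field) pvec"
  assumes y: "y \<in> vecs (P0 Q Z)"
  obtains a where "a \<in> Lam Q Z" "\<And>z. a z \<noteq> 0 \<Longrightarrow> fst z = pt Q z" "cycle_coeffs Q Z a = y"
proof
  define a :: "('v, 'a, 'k) lam"
    where "a = (\<lambda>c. if c \<in> B \<and> fst c = pt Q c then - y ((fst c, []), c) else 0)"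
  show "a \<in> Lam Q Z"
    by (simp add: a_def Lam_iff)
  show "fst z = pt Q z" if "a z \<noteq> 0" for z
    using that by (simp add: a_def split: if_splits)
  show "cycle_coeffs Q Z a = y"
  proof
    fix u :: "('v, 'a) path \<times> ('v, 'a) path"
    show "cycle_coeffs Q Z a u = y u"
    proof (cases "u \<in> P0 Q Z")
      case True
      then have u: "snd u \<in> B" "fst (snd u) = pt Q (snd u)" "fst u = (fst (snd u), [])"
        using P0_iff by auto
      have "((fst (snd u), []), snd u) = u"
        using u(3) by (simp add: prod_eq_iff)
      then show ?thesis
        using True u by (simp add: cycle_coeffs_def a_def)
    next
      case False
      moreover have "y u = 0"
        using y False unfolding vecs_def by blast
      ultimately show ?thesis
        by (simp add: cycle_coeffs_def)
    qed
  qed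
qed

lemma psi0_Ker1_Ad:
  fixes y :: "('v, 'a, 'k::field) pvec"
  assumes y: "y \<in> vecs (P0 Q Z)"
  shows "psi0 Q Z y \<in> Ker1 Q Z" "der_of Q Z (psi0 Q Z y) \<in> Ad Q Z"
proof -
  obtain a :: "('v, 'a, 'k) lam" where a: "a \<in> Lam Q Z" and cyclic: "\<And>z. a z \<noteq> 0 \<Longrightarrow> fst z = pt Q z"
    and y_eq: "cycle_coeffs Q Z a = y"
    using cycle_coeffs_surj[OF y] by blast
  have "arrow_part Q Z (inner_der Q Z a) = psi0 Q Z (cycle_coeffs Q Z a)"
    by (rule arrow_part_inner_der[OF a cyclic])
  then have psi0_y: "psi0 Q Z y = arrow_part Q Z (inner_der Q Z a)"
    unfolding y_eq by (rule sym)
  have vertices: "inner_der Q Z a (basis_vec (v, [])) = vzero" if "v \<in> verts Q" for v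
    by (rule inner_der_vertex_zero[OF a cyclic that])
  show "psi0 Q Z y \<in> Ker1 Q Z"
    unfolding psi0_y by (rule arrow_part_Ker1[OF inner_der_Der[OF a] vertices])
  have "der_of Q Z (arrow_part Q Z (inner_der Q Z a)) = inner_der Q Z a"
    by (rule der_of_arrow_part[OF inner_der_Der[OF a] vertices])
  then show "der_of Q Z (psi0 Q Z y) \<in> Ad Q Z"
    unfolding psi0_y Ad_iff using a by blast
qed

lemma Ker1_Ad_imp_Im0:
  assumes x: "x \<in> Ker1 Q Z" and ad: "der_of Q Z x \<in> Ad Q Z"
  shows "x \<in> Im0 Q Z"
proof -
  obtain a where a: "a \<in> Lam Q Z" and xa: "der_of Q Z x = inner_der Q Z a"
    using ad Ad_iff by blast
  have vertices: "inner_der Q Z a (basis_vec (v, [])) = vzero" if "v \<in> verts Q" for v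
    using der_of_vertex[OF that, of x] xa by simp
  have cyclic: "fst z = pt Q z" if "a z \<noteq> 0" for z
    by (rule cyclic_of_inner_der_vertex_zero[OF a vertices that])
  have "x \<in> vecs (P1 Q Z)"
    using x by (simp add: Ker1_def)
  then have "x = arrow_part Q Z (der_of Q Z x)"
    by (simp add: arrow_part_der_of)
  also have "\<dots> = psi0 Q Z (cycle_coeffs Q Z a)"
    unfolding xa by (rule arrow_part_inner_der[OF a cyclic])
  finally show ?thesis
    unfolding Im0_def by (auto simp: vecs_def cycle_coeffs_def)
qed

section \<open>The bracket\<close>

lemma sum_P1_fst_eq:
  "(\<Sum>v\<in>P1 Q Z. if fst v = q then H v else 0) = (\<Sum>w\<in>B. if (q, w) \<in> P1 Q Z then H (q, w) else 0)"
proof -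
  have P1_q: "{v \<in> P1 Q Z. fst v = q} = Pair q ` {w \<in> B. (q, w) \<in> P1 Q Z}"
  proof
    show "{v \<in> P1 Q Z. fst v = q} \<subseteq> Pair q ` {w \<in> B. (q, w) \<in> P1 Q Z}"
    proof
      fix v
      assume v: "v \<in> {v \<in> P1 Q Z. fst v = q}"
      then have "snd v \<in> B" "v = (q, snd v)"
        using P1_iff by (auto simp: prod_eq_iff)
      then show "v \<in> Pair q ` {w \<in> B. (q, w) \<in> P1 Q Z}"
        using v by (metis (mono_tags, lifting) image_eqI mem_Collect_eq)
    qed
  qed auto
  have "(\<Sum>v\<in>P1 Q Z. if fst v = q then H v else 0) = (\<Sum>v\<in>{v \<in> P1 Q Z. fst v = q}. H v)"
    by (rule sum.inter_filter[OF finite_P1, symmetric])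
  also have "\<dots> = (\<Sum>w\<in>{w \<in> B. (q, w) \<in> P1 Q Z}. H (q, w))"
    unfolding P1_q by (rule sum.reindex[unfolded comp_def]) (simp add: inj_on_def)
  also have "\<dots> = (\<Sum>w\<in>B. if (q, w) \<in> P1 Q Z then H (q, w) else 0)"
    by (rule sum.inter_filter[OF finite_B])
  finally show ?thesis .
qed

lemma lie_br_eq:
  "lie_br Q Z x y (q, z) = (\<Sum>w\<in>B. if (q, w) \<in> P1 Q Z then y (q, w) * subst_sum Q Z x w z else 0)
                         - (\<Sum>w\<in>B. if (q, w) \<in> P1 Q Z then x (q, w) * subst_sum Q Z y w z else 0)"
proof -
  have "lie_br Q Z x y (q, z) = (\<Sum>u\<in>P1 Q Z. \<Sum>v\<in>P1 Q Z.
      x u * y v * (if q = fst v then subst_coeff Q Z (snd v) (hd (snd (fst u))) (snd u) z else 0))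
    - (\<Sum>u\<in>P1 Q Z. \<Sum>v\<in>P1 Q Z.
      x u * y v * (if q = fst u then subst_coeff Q Z (snd u) (hd (snd (fst v))) (snd v) z else 0))"
    by (simp add: lie_br_def br_b_def right_diff_distrib sum_subtractf)
  also have "(\<Sum>u\<in>P1 Q Z. \<Sum>v\<in>P1 Q Z.
      x u * y v * (if q = fst v then subst_coeff Q Z (snd v) (hd (snd (fst u))) (snd u) z else 0))
     = (\<Sum>v\<in>P1 Q Z. if fst v = q then y v * subst_sum Q Z x (snd v) z else 0)"
  proof -
    have "(\<Sum>u\<in>P1 Q Z. \<Sum>v\<in>P1 Q Z.
        x u * y v * (if q = fst v then subst_coeff Q Z (snd v) (hd (snd (fst u))) (snd u) z else 0))
      = (\<Sum>v\<in>P1 Q Z. \<Sum>u\<in>P1 Q Z.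
        x u * y v * (if q = fst v then subst_coeff Q Z (snd v) (hd (snd (fst u))) (snd u) z else 0))"
      by (rule sum.swap)
    also have "\<dots> = (\<Sum>v\<in>P1 Q Z. if fst v = q then y v * subst_sum Q Z x (snd v) z else 0)"
    proof (rule sum.cong[OF refl])
      fix v
      show "(\<Sum>u\<in>P1 Q Z.
            x u * y v * (if q = fst v then subst_coeff Q Z (snd v) (hd (snd (fst u))) (snd u) z else 0))
          = (if fst v = q then y v * subst_sum Q Z x (snd v) z else 0)"
        by (cases "fst v = q") (auto simp: subst_sum_def sum_distrib_left mult_ac intro!: sum.cong)
    qed
    finally show ?thesis .
  qed
  also have "(\<Sum>u\<in>P1 Q Z. \<Sum>v\<in>P1 Q Z.
      x u * y v * (if q = fst u then subst_coeff Q Z (snd u) (hd (snd (fst v))) (snd v) z else 0))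
     = (\<Sum>u\<in>P1 Q Z. if fst u = q then x u * subst_sum Q Z y (snd u) z else 0)"
    by (intro sum.cong refl)
      (auto simp: subst_sum_def sum_distrib_left mult_ac intro!: sum.cong)
  finally show ?thesis
    unfolding sum_P1_fst_eq by (simp cong: if_cong)
qed

lemma arrow_part_mcomm:
  fixes x y :: "('v, 'a, 'k::field) pvec"
  shows "arrow_part Q Z (mcomm (der_of Q Z x) (der_of Q Z y)) = lie_br Q Z x y"
proof
  fix u :: "('v, 'a) path \<times> ('v, 'a) path"
  obtain q z where u: "u = (q, z)"
    by (cases u)
  show "arrow_part Q Z (mcomm (der_of Q Z x) (der_of Q Z y)) u = lie_br Q Z x y u"
  proof (cases "(q, z) \<in> P1 Q Z")
    case True
    then obtain b where b: "b \<in> arrs Q" "q = apath Q b"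
      using P1_iff[of "(q, z)"] by auto
    have q: "q \<in> B"
      using arrow_in_Bset[OF b(1)] b(2) by simp
    have arrow: "subst_sum Q Z x' q w = (if (q, w) \<in> P1 Q Z then x' (q, w) else 0)"
      for x' :: "('v, 'a, 'k) pvec" and w
      unfolding b(2) by (rule subst_sum_arrow[OF b(1)])
    have "arrow_part Q Z (mcomm (der_of Q Z x) (der_of Q Z y)) u
        = der_of Q Z x (subst_sum Q Z y q) z - der_of Q Z y (subst_sum Q Z x q) z"
      using True u by (simp add: arrow_part_apply mcomm_def vsub_def der_of_basis_vec[OF q])
    also have "\<dots> = (\<Sum>w\<in>B. subst_sum Q Z y q w * subst_sum Q Z x w z)
        - (\<Sum>w\<in>B. subst_sum Q Z x q w * subst_sum Q Z y w z)"
      by (simp add: der_of_apply[OF subst_sum_Lam])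
    also have "\<dots> = lie_br Q Z x y u"
      unfolding u lie_br_eq arrow by (simp add: if_distrib[of "\<lambda>t. t * _"] cong: if_cong)
    finally show ?thesis .
  next
    case False
    have "(q, z) \<in> P1 Q Z" if qw: "(q, w) \<in> P1 Q Z" and nz: "subst_sum Q Z x' w z \<noteq> 0"
      for w and x' :: "('v, 'a, 'k) pvec"
    proof -
      obtain b where b: "b \<in> arrs Q" "q = apath Q b" "w \<in> B" "fst w = src Q b" "pt Q w = tgt Q b"
        using P1_iff[of "(q, w)"] qw by auto
      then show ?thesis
        using subst_sum_parallel[OF Bset_walk[OF b(3)] nz] P1_iff[of "(q, z)"] by auto
    qed
    then have zero: "subst_sum Q Z x' w z = 0" if "(q, w) \<in> P1 Q Z" for w and x' :: "('v, 'a, 'k) pvec"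
      using that False by blast
    have "lie_br Q Z x y (q, z) = 0"
      unfolding lie_br_eq by (simp add: zero cong: if_cong)
    then show ?thesis
      using False u by (simp add: arrow_part_apply)
  qed
qed

lemma lie_br_Ker1:
  assumes x: "x \<in> Ker1 Q Z" and y: "y \<in> Ker1 Q Z"
  shows "lie_br Q Z x y \<in> Ker1 Q Z"
    and "der_of Q Z (lie_br Q Z x y) = mcomm (der_of Q Z x) (der_of Q Z y)"
proof -
  have Dx: "der_of Q Z x \<in> Der Q Z" and Dy: "der_of Q Z y \<in> Der Q Z"
    using x y by (simp_all add: Ker1_der_of_Der)
  have vertices: "mcomm (der_of Q Z x) (der_of Q Z y) (basis_vec (v, [])) = vzero" if "v \<in> verts Q" for v
    unfolding mcomm_def der_of_vertex[OF that] Der_vzero[OF Dx] Der_vzero[OF Dy]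
    by (simp add: vsub_def fun_eq_iff)
  show "lie_br Q Z x y \<in> Ker1 Q Z"
    using arrow_part_Ker1[OF mcomm_Der[OF Dx Dy] vertices] by (simp add: arrow_part_mcomm)
  show "der_of Q Z (lie_br Q Z x y) = mcomm (der_of Q Z x) (der_of Q Z y)"
    using der_of_arrow_part[OF mcomm_Der[OF Dx Dy] vertices] by (simp add: arrow_part_mcomm)
qed

lemma Im0_Ker1_Ad:
  assumes "x \<in> Im0 Q Z"
  shows "x \<in> Ker1 Q Z" "der_of Q Z x \<in> Ad Q Z"
  using assms psi0_Ker1_Ad unfolding Im0_def by auto

lemma lie_br_Im0:
  assumes x: "x \<in> Ker1 Q Z" and y: "y \<in> Im0 Q Z"
  shows "lie_br Q Z x y \<in> Im0 Q Z"
proof -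
  obtain a where a: "a \<in> Lam Q Z" and ya: "der_of Q Z y = inner_der Q Z a"
    using Im0_Ker1_Ad(2)[OF y] Ad_iff by blast
  have "der_of Q Z (lie_br Q Z x y) = inner_der Q Z (der_of Q Z x a)"
    unfolding lie_br_Ker1(2)[OF x Im0_Ker1_Ad(1)[OF y]] ya
    by (rule mcomm_inner_der[OF Ker1_der_of_Der[OF x] a])
  then have "der_of Q Z (lie_br Q Z x y) \<in> Ad Q Z"
    using der_of_Lam Ad_iff by blast
  then show ?thesis
    using Ker1_Ad_imp_Im0 lie_br_Ker1(1)[OF x Im0_Ker1_Ad(1)[OF y]] by blast
qed

end

theorem theorem1p7:
  fixes Q :: "('v, 'a) quiver" and Z :: "('v, 'a) path set"
  assumes "alg_closed TYPE('k::field)"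
    and "finite_quiver Q"
    and "monomial_relations Q Z"
    and "finite (Bset Q Z)"
  shows "(\<forall>x\<in>(Ker1 Q Z :: ('v, 'a, 'k) pvec set). \<forall>y\<in>Ker1 Q Z. lie_br Q Z x y \<in> Ker1 Q Z)
   \<and> (Im0 Q Z :: ('v, 'a, 'k) pvec set) \<subseteq> Ker1 Q Z
   \<and> (\<forall>x\<in>(Ker1 Q Z :: ('v, 'a, 'k) pvec set). \<forall>y\<in>Im0 Q Z. lie_br Q Z x y \<in> Im0 Q Z)
   \<and> (\<exists>\<Phi> :: ('v, 'a, 'k) pvec \<Rightarrow> ('v, 'a, 'k) lam \<Rightarrow> ('v, 'a, 'k) lam.
        (\<forall>x\<in>Ker1 Q Z. \<Phi> x \<in> Der Q Z)
      \<and> (\<forall>x\<in>Ker1 Q Z. \<forall>y\<in>Ker1 Q Z. \<Phi> (vadd x y) = madd (\<Phi> x) (\<Phi> y))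
      \<and> (\<forall>c. \<forall>x\<in>Ker1 Q Z. \<Phi> (vscale c x) = mscale c (\<Phi> x))
      \<and> (\<forall>D\<in>Der Q Z. \<exists>x\<in>Ker1 Q Z. msub (\<Phi> x) D \<in> Ad Q Z)
      \<and> (\<forall>x\<in>Ker1 Q Z. \<Phi> x \<in> Ad Q Z \<longleftrightarrow> x \<in> Im0 Q Z)
      \<and> (\<forall>x\<in>Ker1 Q Z. \<forall>y\<in>Ker1 Q Z.
           msub (\<Phi> (lie_br Q Z x y)) (mcomm (\<Phi> x) (\<Phi> y)) \<in> Ad Q Z))"
proof -
  interpret monomial_algebra Q Z
    using assms(2-4) by unfold_locales
  show ?thesis
  proof (intro conjI subsetI ballI allI exI[of _ "der_of Q Z"])
    show "x \<in> Im0 Q Z \<Longrightarrow> x \<in> Ker1 Q Z" for x :: "('v, 'a, 'k) pvec"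
      by (rule Im0_Ker1_Ad(1))
    show "der_of Q Z x \<in> Ad Q Z \<longleftrightarrow> x \<in> Im0 Q Z" if "x \<in> Ker1 Q Z" for x :: "('v, 'a, 'k) pvec"
      using Ker1_Ad_imp_Im0[OF that] Im0_Ker1_Ad(2) by blast
    show "msub (der_of Q Z (lie_br Q Z x y)) (mcomm (der_of Q Z x) (der_of Q Z y)) \<in> Ad Q Z"
      if "x \<in> Ker1 Q Z" "y \<in> Ker1 Q Z" for x y :: "('v, 'a, 'k) pvec"
      using lie_br_Ker1(2)[OF that] msub_self_Ad by simp
  qed (simp_all add: lie_br_Ker1(1) lie_br_Im0 Ker1_der_of_Der der_of_vadd der_of_vscale
      der_of_surj_mod_Ad)
qed

end
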